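(* Let $\tau>0$ and let $\psi$ satisfy Assumption $(\mathrm{A}_\ell)$ with some $\ell\ge 1$. Suppose the initial history satisfies $(\eta_s,v_s)\in\mathcal C([-\tau,0]\times\overline\Omega_0)$ with $\eta_0(x)=x$. Then there exists a unique global-in-time solution $\eta\in\mathcal C^1([0,\infty);\mathcal C(\overline\Omega_0))$, $v\in\mathcal C([0,\infty)\times\overline\Omega_0)$ of the Lagrangian system (L), and it satisfies \[ \|v_t\|_{L^\infty([0,\infty)\times\Omega_0)}\le \max_{s\in[-\tau,0]}\|v_s\|_{L^\infty(\Omega_0)}. \]
   Context: Let $d\in\mathbb N$, let $\tau\ge0$ be a fixed delay, let $\Omega_0\subset\mathbb R^d$ be a bounded open set, and let $\rho_0:\Omega_0\to[0,\infty)$ be integrable with $\int_{\Omega_0}\rho_0=1$. Assumption $(\mathrm{A}_\ell)$ on the influence function $\psi:\mathbb R^d\to(0,\infty)$: $\psi$ is continuous and radially symmetric, $\psi(x)=\widetilde\psi(|x|)$, where $\widetilde\psi:[0,\infty)\to(0,\infty)$ is nonincreasing, positive, bounded, with $\widetilde\psi(0)=1$ (so $0<\psi\le1$). Moreover, if $\ell\ge1$, $\psi$ is $\ell$ times continuously differentiable on $\mathbb R^d$ with uniformly bounded derivatives up to order $\ell$. Lagrangian system (L): for $x\in\Omega_0$ and $t>0$, \[ \frac{d\eta_t(x)}{dt}=v_t(x),\qquad \frac{dv_t(x)}{dt}=\frac{\int_{\Omega_0}\psi(\eta_t(x)-\eta_{t-\tau}(y))\rho_0(y)v_{t-\tau}(y)\,dy}{\int_{\Omega_0}\psi(\eta_t(x)-\eta_{t-\tau}(y))\rho_0(y)\,dy}-v_t(x),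 \] with prescribed initial history $(\eta_s,v_s)$ for $s\in[-\tau,0]$, $x\in\Omega_0$, where $\eta_0(x)=x$. *)

theory Defs
  imports "HOL-Analysis.Analysis"
begin

text \<open>The theorem assumes (A_l) for some l >= 1; since (A_l) implies (A_1) and
  (A_1) is itself one instance, this is equivalent to assuming (A_1).\<close>
definition assumption_A1 :: "('a::euclidean_space \<Rightarrow> real) \<Rightarrow> (real \<Rightarrow> real) \<Rightarrow> bool" where
  "assumption_A1 \<psi> \<psi>t \<longleftrightarrow>
     continuous_on UNIV \<psi> \<and>
     (\<forall>x. \<psi> x = \<psi>t (norm x)) \<and>
     (\<forall>r\<in>{0..}. \<forall>s\<in>{0..}. r \<le> s \<longrightarrow> \<psi>t s \<le> \<psi>t r) \<and>
     (\<forall>r\<ge>0. \<psi>t r > 0) \<and>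
     bounded (\<psi>t ` {0..}) \<and>
     \<psi>t 0 = 1 \<and>
     (\<exists>\<psi>' :: 'a \<Rightarrow> 'a \<Rightarrow>\<^sub>L real.
        (\<forall>x. (\<psi> has_derivative blinfun_apply (\<psi>' x)) (at x)) \<and>
        continuous_on UNIV \<psi>' \<and> bounded (range \<psi>'))"

definition align_rhs ::
  "real \<Rightarrow> 'a::euclidean_space set \<Rightarrow> ('a \<Rightarrow> real) \<Rightarrow> ('a \<Rightarrow> real)
    \<Rightarrow> (real \<Rightarrow> 'a \<Rightarrow> 'a) \<Rightarrow> (real \<Rightarrow> 'a \<Rightarrow> 'a) \<Rightarrow> real \<Rightarrow> 'a \<Rightarrow> 'a" where
  "align_rhs \<tau> \<Omega> \<rho> \<psi> \<eta> v t x =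
     (1 / integral \<Omega> (\<lambda>y. \<psi> (\<eta> t x - \<eta> (t - \<tau>) y) * \<rho> y)) *\<^sub>R
       integral \<Omega> (\<lambda>y. (\<psi> (\<eta> t x - \<eta> (t - \<tau>) y) * \<rho> y) *\<^sub>R v (t - \<tau>) y)
     - v t x"

text \<open>(eta, v) is a solution of (L) on [0,oo) with initial history (etah, vh):
  it coincides with the history on [-tau,0] x closure Omega;
  eta is in C^1([0,oo); C(closure Omega)) with derivative v (differentiability
  in the sup norm over closure Omega, one-sided at t = 0);
  v is in C([0,oo) x closure Omega); and the velocity equation holds pointwise
  for x in Omega and t > 0.\<close>
definition is_solution_L ::
  "real \<Rightarrow> 'a::euclidean_space set \<Rightarrow> ('a \<Rightarrow> real) \<Rightarrow> ('a \<Rightarrow> real)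
    \<Rightarrow> (real \<Rightarrow> 'a \<Rightarrow> 'a) \<Rightarrow> (real \<Rightarrow> 'a \<Rightarrow> 'a)
    \<Rightarrow> (real \<Rightarrow> 'a \<Rightarrow> 'a) \<Rightarrow> (real \<Rightarrow> 'a \<Rightarrow> 'a) \<Rightarrow> bool" where
  "is_solution_L \<tau> \<Omega> \<rho> \<psi> \<eta>h vh \<eta> v \<longleftrightarrow>
     (\<forall>s\<in>{-\<tau>..0}. \<forall>x\<in>closure \<Omega>. \<eta> s x = \<eta>h s x \<and> v s x = vh s x) \<and>
     continuous_on ({0..} \<times> closure \<Omega>) (\<lambda>(t, x). \<eta> t x) \<and>
     continuous_on ({0..} \<times> closure \<Omega>) (\<lambda>(t, x). v t x) \<and>
     (\<forall>t\<ge>0. \<forall>e>0. \<exists>\<delta>>0. \<forall>s\<ge>0. \<bar>s - t\<bar> < \<delta> \<longrightarrow>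
        (\<forall>x\<in>closure \<Omega>. norm (\<eta> s x - \<eta> t x - (s - t) *\<^sub>R v t x) \<le> e * \<bar>s - t\<bar>)) \<and>
     (\<forall>x\<in>\<Omega>. \<forall>t>0.
        ((\<lambda>s. v s x) has_vector_derivative align_rhs \<tau> \<Omega> \<rho> \<psi> \<eta> v t x) (at t))"

end

theory Submission
  imports Defs
begin

text \<open>Multiplying the velocity equation by \<open>e\<^sup>t\<close> turns (L) into the fixed-point problem
  \<open>\<eta>\<^sub>t = \<eta>\<^sub>0 + \<integral>\<^sub>0\<^sup>t v\<^sub>s ds\<close>, \<open>v\<^sub>t = e\<^sup>-\<^sup>t v\<^sub>0 + \<integral>\<^sub>0\<^sup>t e\<^sup>s\<^sup>-\<^sup>t G\<^sub>s ds\<close>, where \<open>G\<^sub>s(x)\<close> is the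
  \<open>\<psi>\<rho>\<^sub>0\<close>-weighted average of the velocities at time \<open>s - \<tau>\<close>. Being a convex combination, \<open>G\<close>
  never exceeds the largest speed of the history, and neither do the Picard iterates nor their
  limit. Along trajectories bounded by \<open>B\<close> the total weight is at least \<open>\<psi>t (2B)\<close> and \<open>\<psi>\<close> is
  Lipschitz, so \<open>G\<close> is Lipschitz in the positions and velocities; the factorial estimate of
  Picard's method then gives uniform convergence of the iterates on every \<open>[-\<tau>, T] \<times> closure \<Omega>\<^sub>0\<close>,
  and, applied to two solutions (both fixed points), uniqueness.\<close>

section \<open>Integrals, continuity and uniform limits\<close>

lemma bilinear_scaleR_flip: "bilinear (\<lambda>(v::'a::real_vector) (a::real). a *\<^sub>R v)"
  unfolding bilinear_def by (auto intro!: linearI simp: scaleR_add_left scaleR_add_right)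

lemma has_integral_mult_power:
  assumes "0 \<le> t"
  shows "((\<lambda>s. c * s^m) has_integral c * t^Suc m / Suc m) {0..t}"
proof -
  have "((\<lambda>s. c * s^m) has_integral c * t^Suc m / Suc m - c * 0^Suc m / Suc m) {0..t}"
  proof (rule fundamental_theorem_of_calculus[OF assms])
    fix x :: real
    have "((\<lambda>s. c * s^Suc m / Suc m) has_real_derivative c * (Suc m * x^m) / Suc m) (at x within {0..t})"
      using DERIV_pow[of "Suc m" x "{0..t}"] by (intro DERIV_cdivide DERIV_cmult) simp
    then show "((\<lambda>s. c * s^Suc m / Suc m) has_vector_derivative c * x^m) (at x within {0..t})"
      by (simp add: has_real_derivative_iff_has_vector_derivative del: of_nat_Suc)
  qed
  then show ?thesis by simp
qed

lemma norm_integral_le_mult_power: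
  fixes f :: "real \<Rightarrow> 'a::euclidean_space"
  assumes "f integrable_on {0..t}" "0 \<le> t" "\<And>s. s \<in> {0..t} \<Longrightarrow> norm (f s) \<le> c * s^m"
  shows "norm (integral {0..t} f) \<le> c * t^Suc m / Suc m"
  using integral_norm_bound_integral[OF assms(1) has_integral_integrable[OF has_integral_mult_power] assms(3)]
    integral_unique[OF has_integral_mult_power] assms(2) by metis

lemma picard_factorial_bound:
  fixes f :: "nat \<Rightarrow> real \<Rightarrow> 'b \<Rightarrow> real"
  assumes K: "K \<ge> 0" and C: "C \<ge> 0"
    and base: "\<And>t x. t \<in> {0..T} \<Longrightarrow> x \<in> X \<Longrightarrow> f 0 t x \<le> C"
    and step: "\<And>n c m t x. c \<ge> 0 \<Longrightarrow> (\<And>s y. s \<in> {0..T} \<Longrightarrow> y \<in> X \<Longrightarrow> f n s y \<le> c * s^m) \<Longrightarrow>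
        t \<in> {0..T} \<Longrightarrow> x \<in> X \<Longrightarrow> f (Suc n) t x \<le> K * c * t^Suc m / Suc m"
    and "t \<in> {0..T}" "x \<in> X"
  shows "f n t x \<le> C * (K * t)^n / fact n"
  using assms(5,6)
proof (induction n arbitrary: t x)
  case 0
  then show ?case using base by simp
next
  case (Suc n)
  have hyp: "f n s y \<le> (C * K^n / fact n) * s^n" if "s \<in> {0..T}" "y \<in> X" for s y
    using Suc.IH[OF that] by (simp add: power_mult_distrib)
  have "f (Suc n) t x \<le> K * (C * K^n / fact n) * t^Suc n / Suc n"
    by (rule step[OF _ hyp Suc.prems]) (use K C in simp)
  also have "\<dots> = C * (K * t)^Suc n / fact (Suc n)"
    by (simp add: power_mult_distrib field_simps del: of_nat_Suc)
  finally show ?case .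
qed

lemma summable_exp_series: "summable (\<lambda>n. C * (x::real)^n / fact n)"
proof -
  have "summable (\<lambda>n. C * (inverse (fact n) * x^n))"
    by (intro summable_mult summable_exp)
  then show ?thesis by (simp add: field_simps)
qed

lemma continuous_on_fixed_fst:
  assumes "continuous_on (A \<times> B) (\<lambda>(t, x). f t x)" "t \<in> A" "C \<subseteq> B"
  shows "continuous_on C (f t)"
  by (rule continuous_on_compose2[OF assms(1), of _ "\<lambda>x. (t, x)", simplified])
    (use assms in \<open>auto intro!: continuous_intros\<close>)

lemma continuous_on_fixed_snd:
  assumes "continuous_on (A \<times> B) (\<lambda>(t, x). f t x)" "x \<in> B" "C \<subseteq> A"
  shows "continuous_on C (\<lambda>t. f t x)"
  by (rule continuous_on_compose2[OF assms(1), of _ "\<lambda>t. (t, x)", simplified])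
    (use assms in \<open>auto intro!: continuous_intros\<close>)

text \<open>The identity \<open>\<integral>\<^sub>a\<^sup>t F s x ds = \<integral>\<^sub>a\<^sup>b F (min s t) x ds - (b - t) F t x\<close> trades the moving
  endpoint for a fixed interval and a jointly continuous integrand.\<close>
lemma continuous_on_integral_upper_limit:
  fixes F :: "real \<Rightarrow> 'a::topological_space \<Rightarrow> 'b::euclidean_space"
  assumes cF: "continuous_on ({a..b} \<times> K) (\<lambda>(s, x). F s x)"
  shows "continuous_on ({a..b} \<times> K) (\<lambda>(t, x). integral {a..t} (\<lambda>s. F s x))"
proof -
  have eq: "integral {a..t} (\<lambda>s. F s x) = integral {a..b} (\<lambda>s. F (min s t) x) - (b - t) *\<^sub>R F t x"
    if t: "t \<in> {a..b}" and x: "x \<in> K" for t x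
  proof -
    have "continuous_on {a..b} (\<lambda>s. F (min s t) x)"
      by (rule continuous_on_compose2[OF cF, of _ "\<lambda>s. (min s t, x)", simplified])
        (use t x in \<open>auto intro!: continuous_intros\<close>)
    then have int: "(\<lambda>s. F (min s t) x) integrable_on {a..b}"
      by (rule integrable_continuous_real)
    have "integral {a..b} (\<lambda>s. F (min s t) x)
        = integral {a..t} (\<lambda>s. F (min s t) x) + integral {t..b} (\<lambda>s. F (min s t) x)"
      using t by (intro Henstock_Kurzweil_Integration.integral_combine[symmetric] int) auto
    also have "integral {a..t} (\<lambda>s. F (min s t) x) = integral {a..t} (\<lambda>s. F s x)"
      by (rule integral_cong) auto
    also have "integral {t..b} (\<lambda>s. F (min s t) x) = (b - t) *\<^sub>R F t x"
      using t by (subst integral_cong[of _ _ "\<lambda>s. F t x"]) auto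
    finally show ?thesis by simp
  qed
  have "continuous_on (({a..b} \<times> K) \<times> cbox a b)
      (\<lambda>p. (\<lambda>(s, x). F s x) (min (snd p) (fst (fst p)), snd (fst p)))"
    by (rule continuous_on_compose2[OF cF]) (auto intro!: continuous_intros)
  then have "continuous_on (({a..b} \<times> K) \<times> cbox a b) (\<lambda>(z, s). F (min s (fst z)) (snd z))"
    by (simp add: case_prod_beta)
  from integral_continuous_on_param[OF this]
  have "continuous_on ({a..b} \<times> K) (\<lambda>z. integral {a..b} (\<lambda>s. F (min s (fst z)) (snd z)))"
    by (simp add: cbox_interval)
  moreover have "continuous_on ({a..b} \<times> K) (\<lambda>z. F (fst z) (snd z))"
    using cF by (simp add: case_prod_beta)
  then have "continuous_on ({a..b} \<times> K) (\<lambda>z. (b - fst z) *\<^sub>R F (fst z) (snd z))"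
    by (intro continuous_intros)
  ultimately have "continuous_on ({a..b} \<times> K)
      (\<lambda>z. integral {a..b} (\<lambda>s. F (min s (fst z)) (snd z)) - (b - fst z) *\<^sub>R F (fst z) (snd z))"
    by (rule continuous_on_diff)
  then show ?thesis
    by (rule continuous_on_eq) (auto simp: eq)
qed

lemma continuous_on_if_nonpos:
  fixes a T :: real
  assumes "a \<le> 0" "0 \<le> T" "closed K"
    and cA: "continuous_on ({a..0} \<times> K) (\<lambda>(t, x). A t x)"
    and cB: "continuous_on ({0..T} \<times> K) (\<lambda>(t, x). B t x)"
    and eq: "\<And>x. x \<in> K \<Longrightarrow> A 0 x = B 0 x"
  shows "continuous_on ({a..T} \<times> K) (\<lambda>(t, x). if t \<le> 0 then A t x else B t x)"
proof -
  have "continuous_on ({a..0} \<times> K \<union> {0..T} \<times> K)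
      (\<lambda>z. if fst z \<le> 0 then (\<lambda>(t, x). A t x) z else (\<lambda>(t, x). B t x) z)"
    by (rule continuous_on_cases) (use assms in \<open>auto simp: closed_Times\<close>)
  moreover have "{a..0} \<times> K \<union> {0..T} \<times> K = {a..T} \<times> K" using assms by auto
  moreover have "(\<lambda>z. if fst z \<le> 0 then (\<lambda>(t, x). A t x) z else (\<lambda>(t, x). B t x) z)
      = (\<lambda>(t, x). if t \<le> 0 then A t x else B t x)" by (auto simp: fun_eq_iff)
  ultimately show ?thesis by metis
qed

lemma continuous_on_atLeast_Times:
  fixes f :: "real \<times> 'b::metric_space \<Rightarrow> 'c::topological_space"
  assumes "a \<le> 0" "\<And>T. T \<ge> 0 \<Longrightarrow> continuous_on ({a..T} \<times> K) f"
  shows "continuous_on ({0..} \<times> K) f"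
  unfolding continuous_on_eq_continuous_within
proof
  fix z :: "real \<times> 'b" assume z: "z \<in> {0..} \<times> K"
  obtain t x where tx: "z = (t, x)" "t \<ge> 0" "x \<in> K" using z by auto
  have "at z within ({0..} \<times> K) = at z within ({0..t+1} \<times> K)"
    by (rule at_within_nhd[of _ "{..<t+1} \<times> UNIV"]) (use tx in \<open>auto intro: open_Times\<close>)
  moreover have "continuous (at z within {a..t+1} \<times> K) f"
    using assms(2)[of "t+1"] assms(1) tx unfolding continuous_on_eq_continuous_within by auto
  then have "continuous (at z within {0..t+1} \<times> K) f"
    by (rule continuous_within_subset) (use assms(1) in auto)
  ultimately show "continuous (at z within {0..} \<times> K) f" by simp
qed

lemma uniform_limit_summable_differences:
  fixes u :: "nat \<Rightarrow> 'b \<Rightarrow> 'c::banach"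
  assumes "summable b" "\<And>n z. z \<in> S \<Longrightarrow> norm (u (Suc n) z - u n z) \<le> b n"
  shows "uniform_limit S u (\<lambda>z. lim (\<lambda>n. u n z)) sequentially"
proof -
  have "uniform_limit S (\<lambda>n z. \<Sum>i<n. u (Suc i) z - u i z) (\<lambda>z. \<Sum>i. u (Suc i) z - u i z) sequentially"
    by (rule Weierstrass_m_test) (use assms in auto)
  then have "uniform_limit S (\<lambda>n z. u 0 z + (\<Sum>i<n. u (Suc i) z - u i z))
      (\<lambda>z. u 0 z + (\<Sum>i. u (Suc i) z - u i z)) sequentially"
    by (intro uniform_limit_add uniform_limit_const)
  moreover have "u 0 z + (\<Sum>i<n. u (Suc i) z - u i z) = u n z" for n z
    using sum_lessThan_telescope[of "\<lambda>i. u i z" n] by simp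
  ultimately have ul: "uniform_limit S u (\<lambda>z. u 0 z + (\<Sum>i. u (Suc i) z - u i z)) sequentially"
    by simp
  moreover have "u 0 z + (\<Sum>i. u (Suc i) z - u i z) = lim (\<lambda>n. u n z)" if "z \<in> S" for z
    using tendsto_uniform_limitI[OF ul that] by (simp add: limI)
  ultimately show ?thesis by (simp cong: uniform_limit_cong')
qed

lemma norm_increment_minus_linear_le:
  fixes v :: "real \<Rightarrow> 'a::topological_space \<Rightarrow> 'b::euclidean_space"
  assumes cv: "continuous_on ({0..T} \<times> K) (\<lambda>(t, x). v t x)"
    and e: "\<And>t. t \<in> {0..T} \<Longrightarrow> e t x = e0 x + integral {0..t} (\<lambda>s. v s x)"
    and uw: "0 \<le> u" "u \<le> t" "t \<le> w" "w \<le> T" and x: "x \<in> K"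
    and close: "\<And>r. r \<in> {u..w} \<Longrightarrow> norm (v r x - v t x) \<le> \<epsilon>"
  shows "norm (e w x - e u x - (w - u) *\<^sub>R v t x) \<le> \<epsilon> * (w - u)"
proof -
  have cx: "continuous_on {0..w} (\<lambda>r. v r x)"
    using continuous_on_fixed_snd[OF cv x] uw by auto
  have iw: "(\<lambda>r. v r x) integrable_on {u..w}"
    by (rule integrable_continuous_real[OF continuous_on_subset[OF cx]]) (use uw in auto)
  have "integral {0..u} (\<lambda>r. v r x) + integral {u..w} (\<lambda>r. v r x) = integral {0..w} (\<lambda>r. v r x)"
    by (rule Henstock_Kurzweil_Integration.integral_combine)
      (use uw in \<open>auto intro: integrable_continuous_real cx\<close>)
  then have "e w x - e u x = integral {u..w} (\<lambda>r. v r x)"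
    using e[of u] e[of w] uw by (simp add: algebra_simps)
  moreover have "integral {u..w} (\<lambda>r. v r x - v t x) = integral {u..w} (\<lambda>r. v r x) - (w - u) *\<^sub>R v t x"
    using integral_diff[OF iw integrable_const_ivl] uw by simp
  ultimately have "e w x - e u x - (w - u) *\<^sub>R v t x = integral {u..w} (\<lambda>r. v r x - v t x)"
    by simp
  also have "norm \<dots> \<le> integral {u..w} (\<lambda>r. \<epsilon>)"
    by (rule integral_norm_bound_integral) (use iw close in \<open>auto intro: integrable_diff\<close>)
  finally show ?thesis using uw by (simp add: mult.commute)
qed

lemma integral_uniformly_differentiable:
  fixes v :: "real \<Rightarrow> 'a::metric_space \<Rightarrow> 'b::euclidean_space"
  assumes cv: "continuous_on ({0..} \<times> K) (\<lambda>(t, x). v t x)" and K: "compact K"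
    and e: "\<And>t x. t \<ge> 0 \<Longrightarrow> x \<in> K \<Longrightarrow> e t x = e0 x + integral {0..t} (\<lambda>s. v s x)"
    and t: "t \<ge> 0" and \<epsilon>: "\<epsilon> > 0"
  shows "\<exists>\<delta>>0. \<forall>s\<ge>0. \<bar>s - t\<bar> < \<delta> \<longrightarrow>
    (\<forall>x\<in>K. norm (e s x - e t x - (s - t) *\<^sub>R v t x) \<le> \<epsilon> * \<bar>s - t\<bar>)"
proof -
  define T where "T = t + 1"
  have cT: "continuous_on ({0..T} \<times> K) (\<lambda>(t, x). v t x)"
    by (rule continuous_on_subset[OF cv]) auto
  have "uniformly_continuous_on ({0..T} \<times> K) (\<lambda>(t, x). v t x)"
    using compact_uniformly_continuous[OF cT] K by (simp add: compact_Times)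
  then obtain d where d: "d > 0" and
    dv: "\<And>z z'. z \<in> {0..T} \<times> K \<Longrightarrow> z' \<in> {0..T} \<times> K \<Longrightarrow> dist z' z < d \<Longrightarrow>
      dist ((\<lambda>(t, x). v t x) z') ((\<lambda>(t, x). v t x) z) < \<epsilon>"
    unfolding uniformly_continuous_on_def using \<epsilon> by metis
  have key: "norm (e w x - e u x - (w - u) *\<^sub>R v t x) \<le> \<epsilon> * (w - u)"
    if uw: "0 \<le> u" "u \<le> t" "t \<le> w" "w \<le> T" "w - u < d" and x: "x \<in> K" for u w x
  proof (rule norm_increment_minus_linear_le[OF cT _ uw(1-4) x])
    fix r assume r: "r \<in> {u..w}"
    have "\<bar>r - t\<bar> < d" using r uw by (auto simp: abs_less_iff)
    then have "dist (r, x) (t, x) < d" by (simp add: dist_Pair_Pair dist_real_def)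
    then show "norm (v r x - v t x) \<le> \<epsilon>"
      using dv[of "(t, x)" "(r, x)"] r uw x by (simp add: dist_norm)
  qed (use e x in auto)
  show ?thesis
  proof (intro exI[of _ "min d 1"] conjI allI impI ballI)
    fix s x assume s: "s \<ge> 0" "\<bar>s - t\<bar> < min d 1" and x: "x \<in> K"
    show "norm (e s x - e t x - (s - t) *\<^sub>R v t x) \<le> \<epsilon> * \<bar>s - t\<bar>"
    proof (cases "t \<le> s")
      case True
      then show ?thesis using key[of t s x] s t x unfolding T_def by auto
    next
      case False
      have "norm (e t x - e s x - (t - s) *\<^sub>R v t x) \<le> \<epsilon> * (t - s)"
        using key[of s t x] s t x False unfolding T_def by auto
      then show ?thesis using False by (simp add: norm_minus_commute algebra_simps)
    qed
  qed (use d in simp)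
qed

section \<open>The alignment average\<close>

lemma assumption_A1D:
  fixes \<psi> :: "'a::euclidean_space \<Rightarrow> real"
  assumes "assumption_A1 \<psi> \<psi>t"
  shows assumption_A1_pos: "\<psi> x > 0"
    and assumption_A1_le_one: "\<psi> x \<le> 1"
    and assumption_A1_profile_le: "norm x \<le> r \<Longrightarrow> \<psi>t r \<le> \<psi> x"
    and assumption_A1_profile_pos: "r \<ge> 0 \<Longrightarrow> \<psi>t r > 0"
    and assumption_A1_continuous: "continuous_on UNIV \<psi>"
proof -
  note A = assms[unfolded assumption_A1_def]
  have mono: "\<And>r s. 0 \<le> r \<Longrightarrow> r \<le> s \<Longrightarrow> \<psi>t s \<le> \<psi>t r" using A by auto
  show "\<psi> x > 0" "continuous_on UNIV \<psi>" using A by auto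
  show "r \<ge> 0 \<Longrightarrow> \<psi>t r > 0" using A by auto
  show "\<psi> x \<le> 1" using mono[of 0 "norm x"] A by auto
  show "\<psi>t r \<le> \<psi> x" if "norm x \<le> r" using mono[of "norm x" r] that A by auto
qed

lemma assumption_A1_lipschitz:
  fixes \<psi> :: "'a::euclidean_space \<Rightarrow> real"
  assumes "assumption_A1 \<psi> \<psi>t"
  obtains L where "L > 0" "\<And>x y. \<bar>\<psi> x - \<psi> y\<bar> \<le> L * norm (x - y)"
proof -
  obtain \<psi>' :: "'a \<Rightarrow> 'a \<Rightarrow>\<^sub>L real"
    where d: "\<And>x. (\<psi> has_derivative blinfun_apply (\<psi>' x)) (at x)" and b: "bounded (range \<psi>')"
    using assms unfolding assumption_A1_def by blast
  obtain B where B: "B > 0" "\<And>x. norm (\<psi>' x) \<le> B"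
    using b unfolding bounded_pos by blast
  have "norm (\<psi> x - \<psi> y) \<le> B * norm (x - y)" for x y
    by (rule differentiable_bound[of UNIV _ "\<lambda>x. blinfun_apply (\<psi>' x)"])
       (use d B in \<open>auto simp: norm_blinfun.rep_eq\<close>)
  then show ?thesis using that[of B] B by auto
qed

locale alignment_weights =
  fixes \<Omega> :: "'a::euclidean_space set" and \<rho> :: "'a \<Rightarrow> real"
    and \<psi> :: "'a \<Rightarrow> real" and \<psi>t :: "real \<Rightarrow> real"
  assumes bounded_Omega: "bounded \<Omega>" and open_Omega: "open \<Omega>"
    and rho_nonneg: "\<And>x. x \<in> \<Omega> \<Longrightarrow> \<rho> x \<ge> 0"
    and rho_integrable: "\<rho> integrable_on \<Omega>"
    and rho_mass: "integral \<Omega> \<rho> = 1"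
    and psi_A1: "assumption_A1 \<psi> \<psi>t"
begin

definition psi_lip :: real where
  "psi_lip = (SOME L. L > 0 \<and> (\<forall>x y. \<bar>\<psi> x - \<psi> y\<bar> \<le> L * norm (x - y)))"

lemma psi_lip: "psi_lip > 0" "\<bar>\<psi> x - \<psi> y\<bar> \<le> psi_lip * norm (x - y)"
proof -
  obtain L where "L > 0" "\<And>x y. \<bar>\<psi> x - \<psi> y\<bar> \<le> L * norm (x - y)"
    using assumption_A1_lipschitz[OF psi_A1] by blast
  then have "\<exists>L. L > 0 \<and> (\<forall>x y. \<bar>\<psi> x - \<psi> y\<bar> \<le> L * norm (x - y))" by blast
  from someI_ex[OF this] show "psi_lip > 0" "\<bar>\<psi> x - \<psi> y\<bar> \<le> psi_lip * norm (x - y)"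
    unfolding psi_lip_def by auto
qed

lemma Omega_nonempty: "\<Omega> \<noteq> {}"
  using rho_mass by auto

lemma compact_closure_Omega: "compact (closure \<Omega>)"
  using bounded_Omega by (simp add: compact_closure)

definition weight :: "'a \<Rightarrow> ('a \<Rightarrow> 'a) \<Rightarrow> 'a \<Rightarrow> real" where
  "weight p E y = \<psi> (p - E y) * \<rho> y"

definition total_weight :: "'a \<Rightarrow> ('a \<Rightarrow> 'a) \<Rightarrow> real" where
  "total_weight p E = integral \<Omega> (weight p E)"

definition weighted_sum :: "'a \<Rightarrow> ('a \<Rightarrow> 'a) \<Rightarrow> ('a \<Rightarrow> 'a) \<Rightarrow> 'a" where
  "weighted_sum p E V = integral \<Omega> (\<lambda>y. weight p E y *\<^sub>R V y)"

text \<open>The quotient of integrals in the velocity equation of (L), with \<open>p = \<eta>\<^sub>t(x)\<close>,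
  \<open>E = \<eta>\<^sub>t\<^sub>-\<^sub>\<tau>\<close> and \<open>V = v\<^sub>t\<^sub>-\<^sub>\<tau>\<close>.\<close>
definition average :: "'a \<Rightarrow> ('a \<Rightarrow> 'a) \<Rightarrow> ('a \<Rightarrow> 'a) \<Rightarrow> 'a" where
  "average p E V = (1 / total_weight p E) *\<^sub>R weighted_sum p E V"

lemma weight_nonneg: "y \<in> \<Omega> \<Longrightarrow> weight p E y \<ge> 0"
  unfolding weight_def using assumption_A1_pos[OF psi_A1] rho_nonneg by (simp add: less_imp_le)

lemma weight_le_rho: "y \<in> \<Omega> \<Longrightarrow> weight p E y \<le> \<rho> y"
  unfolding weight_def using assumption_A1_le_one[OF psi_A1] assumption_A1_pos[OF psi_A1] rho_nonneg
  by (simp add: mult_left_le_one_le less_imp_le)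

lemma weight_absolutely_integrable:
  assumes "continuous_on \<Omega> E"
  shows "weight p E absolutely_integrable_on \<Omega>"
proof -
  have leb: "\<Omega> \<in> sets lebesgue"
    using lmeasurable_open[OF bounded_Omega open_Omega] by (simp add: fmeasurableD)
  have c: "continuous_on \<Omega> (\<lambda>y. \<psi> (p - E y))"
    by (intro continuous_on_compose2[OF assumption_A1_continuous[OF psi_A1]] continuous_intros assms)
      auto
  have "(\<lambda>y. (*) (\<psi> (p - E y)) (\<rho> y)) absolutely_integrable_on \<Omega>"
  proof (rule absolutely_integrable_bounded_measurable_product[OF bilinear_times])
    show "(\<lambda>y. \<psi> (p - E y)) \<in> borel_measurable (lebesgue_on \<Omega>)"
      using continuous_imp_measurable_on_sets_lebesgue[OF c leb] .
    show "bounded ((\<lambda>y. \<psi> (p - E y)) ` \<Omega>)"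
      unfolding bounded_iff using assumption_A1_pos[OF psi_A1] assumption_A1_le_one[OF psi_A1]
      by (intro exI[of _ 1]) (auto simp: less_imp_le)
    show "\<rho> absolutely_integrable_on \<Omega>"
      using nonnegative_absolutely_integrable_1[OF rho_integrable] rho_nonneg by blast
  qed (rule leb)
  then show ?thesis unfolding weight_def by simp
qed

lemma weight_integrable: "continuous_on \<Omega> E \<Longrightarrow> weight p E integrable_on \<Omega>"
  using weight_absolutely_integrable absolutely_integrable_on_def by blast

lemma weighted_integrable:
  assumes "continuous_on \<Omega> E" "continuous_on \<Omega> V" "\<And>y. y \<in> \<Omega> \<Longrightarrow> norm (V y) \<le> M"
  shows "(\<lambda>y. weight p E y *\<^sub>R (V y :: 'a)) integrable_on \<Omega>"
proof -
  have leb: "\<Omega> \<in> sets lebesgue"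
    using lmeasurable_open[OF bounded_Omega open_Omega] by (simp add: fmeasurableD)
  have "(\<lambda>y. (\<lambda>v a. a *\<^sub>R v) (V y) (weight p E y)) absolutely_integrable_on \<Omega>"
    using assms
    by (intro absolutely_integrable_bounded_measurable_product[OF bilinear_scaleR_flip] leb
        continuous_imp_measurable_on_sets_lebesgue weight_absolutely_integrable)
      (auto simp: bounded_iff)
  then show ?thesis using absolutely_integrable_on_def by auto
qed

lemma total_weight_ge:
  assumes "continuous_on \<Omega> E" "\<And>y. y \<in> \<Omega> \<Longrightarrow> norm (E y) \<le> B" "norm p \<le> B"
  shows "total_weight p E \<ge> \<psi>t (2 * B)"
proof -
  have "integral \<Omega> (\<lambda>y. \<psi>t (2 * B) * \<rho> y) \<le> integral \<Omega> (weight p E)"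
  proof (rule integral_le)
    fix y assume y: "y \<in> \<Omega>"
    have "norm (p - E y) \<le> 2 * B"
      using assms(2)[OF y] assms(3) norm_triangle_ineq4[of p "E y"] by linarith
    then show "\<psi>t (2 * B) * \<rho> y \<le> weight p E y"
      unfolding weight_def using assumption_A1_profile_le[OF psi_A1] rho_nonneg[OF y]
      by (simp add: mult_right_mono)
  qed (use rho_integrable weight_integrable[OF assms(1)] in \<open>auto intro: integrable_on_mult_right\<close>)
  then show ?thesis using rho_mass unfolding total_weight_def by simp
qed

lemma norm_weighted_sum_le:
  assumes "continuous_on \<Omega> E" "continuous_on \<Omega> V" "\<And>y. y \<in> \<Omega> \<Longrightarrow> norm (V y) \<le> M"
  shows "norm (weighted_sum p E V) \<le> M * total_weight p E"
proof -
  have "norm (weighted_sum p E V) \<le> integral \<Omega> (\<lambda>y. M * weight p E y)"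
    unfolding weighted_sum_def
  proof (rule integral_norm_bound_integral)
    fix y assume y: "y \<in> \<Omega>"
    show "norm (weight p E y *\<^sub>R V y) \<le> M * weight p E y"
      using mult_right_mono[OF assms(3)[OF y] weight_nonneg[OF y]] weight_nonneg[OF y]
      by (simp add: mult.commute)
  qed (use weighted_integrable[OF assms] weight_integrable[OF assms(1)] in
    \<open>auto intro: integrable_on_mult_right\<close>)
  then show ?thesis unfolding total_weight_def by simp
qed

lemma norm_average_le:
  assumes "continuous_on \<Omega> E" "\<And>y. y \<in> \<Omega> \<Longrightarrow> norm (E y) \<le> B" "norm p \<le> B"
    "continuous_on \<Omega> V" "\<And>y. y \<in> \<Omega> \<Longrightarrow> norm (V y) \<le> M"
  shows "norm (average p E V) \<le> M"
proof -
  have "B \<ge> 0" using assms(3) norm_ge_zero order_trans by blast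
  then have "total_weight p E > 0"
    using total_weight_ge[OF assms(1-3)] assumption_A1_profile_pos[OF psi_A1, of "2 * B"] by simp
  then show ?thesis
    using norm_weighted_sum_le[OF assms(1,4,5)] unfolding average_def
    by (simp add: divide_simps mult.commute)
qed

lemma weight_diff_le:
  assumes "y \<in> \<Omega>" "norm (E y - E' y) \<le> dE"
  shows "\<bar>weight p E y - weight p' E' y\<bar> \<le> psi_lip * (norm (p - p') + dE) * \<rho> y"
proof -
  have "norm ((p - E y) - (p' - E' y)) \<le> norm (p - p') + norm (E y - E' y)"
    using norm_triangle_ineq4[of "p - p'" "E y - E' y"] by (simp add: algebra_simps)
  then have "psi_lip * norm ((p - E y) - (p' - E' y)) \<le> psi_lip * (norm (p - p') + dE)"
    using psi_lip(1) assms(2) by (intro mult_left_mono) auto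
  then have "\<bar>\<psi> (p - E y) - \<psi> (p' - E' y)\<bar> \<le> psi_lip * (norm (p - p') + dE)"
    using psi_lip(2)[of "p - E y" "p' - E' y"] by linarith
  then show ?thesis
    unfolding weight_def using rho_nonneg[OF assms(1)]
    by (simp add: abs_mult left_diff_distrib[symmetric] mult_right_mono)
qed

lemma total_weight_diff_le:
  assumes "continuous_on \<Omega> E" "continuous_on \<Omega> E'" "\<And>y. y \<in> \<Omega> \<Longrightarrow> norm (E y - E' y) \<le> dE"
  shows "\<bar>total_weight p E - total_weight p' E'\<bar> \<le> psi_lip * (norm (p - p') + dE)"
proof -
  have "norm (integral \<Omega> (\<lambda>y. weight p E y - weight p' E' y))
      \<le> integral \<Omega> (\<lambda>y. psi_lip * (norm (p - p') + dE) * \<rho> y)"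
    by (rule integral_norm_bound_integral)
      (use weight_integrable[OF assms(1)] weight_integrable[OF assms(2)] rho_integrable
        weight_diff_le assms(3) in \<open>auto intro: integrable_diff integrable_on_mult_right\<close>)
  then show ?thesis
    using integral_diff[OF weight_integrable[OF assms(1)] weight_integrable[OF assms(2)]] rho_mass
    unfolding total_weight_def by simp
qed

lemma weighted_sum_diff_le:
  assumes cE: "continuous_on \<Omega> E" and cE': "continuous_on \<Omega> E'"
    and cV: "continuous_on \<Omega> V" and cV': "continuous_on \<Omega> V'"
    and bV: "\<And>y. y \<in> \<Omega> \<Longrightarrow> norm (V y) \<le> M" and bV': "\<And>y. y \<in> \<Omega> \<Longrightarrow> norm (V' y) \<le> M"
    and dE: "\<And>y. y \<in> \<Omega> \<Longrightarrow> norm (E y - E' y) \<le> dE"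
    and dV: "\<And>y. y \<in> \<Omega> \<Longrightarrow> norm (V y - V' y) \<le> dV"
  shows "norm (weighted_sum p E V - weighted_sum p' E' V') \<le> psi_lip * (norm (p - p') + dE) * M + dV"
proof -
  define \<delta> where "\<delta> = psi_lip * (norm (p - p') + dE)"
  have int: "(\<lambda>y. weight p E y *\<^sub>R V y) integrable_on \<Omega>" "(\<lambda>y. weight p' E' y *\<^sub>R V' y) integrable_on \<Omega>"
    using weighted_integrable[OF cE cV bV] weighted_integrable[OF cE' cV' bV'] by auto
  have "norm (integral \<Omega> (\<lambda>y. weight p E y *\<^sub>R V y - weight p' E' y *\<^sub>R V' y))
      \<le> integral \<Omega> (\<lambda>y. (\<delta> * M + dV) * \<rho> y)"
  proof (rule integral_norm_bound_integral)
    fix y assume y: "y \<in> \<Omega>"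
    have b1: "norm ((weight p E y - weight p' E' y) *\<^sub>R V y) \<le> (\<delta> * \<rho> y) * M"
      using weight_diff_le[where E=E and E'=E' and p=p and p'=p', OF y dE[OF y]] bV[OF y] unfolding \<delta>_def by (simp add: mult_mono)
    have b2: "norm (weight p' E' y *\<^sub>R (V y - V' y)) \<le> \<rho> y * dV"
      using weight_nonneg[OF y] weight_le_rho[OF y] dV[OF y] rho_nonneg[OF y] by (simp add: mult_mono)
    have "weight p E y *\<^sub>R V y - weight p' E' y *\<^sub>R V' y
        = (weight p E y - weight p' E' y) *\<^sub>R V y + weight p' E' y *\<^sub>R (V y - V' y)"
      by (simp add: algebra_simps)
    then have "norm (weight p E y *\<^sub>R V y - weight p' E' y *\<^sub>R V' y)
        \<le> norm ((weight p E y - weight p' E' y) *\<^sub>R V y) + norm (weight p' E' y *\<^sub>R (V y - V' y))"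
      by (simp only: norm_triangle_ineq)
    moreover have "(\<delta> * \<rho> y) * M + \<rho> y * dV = (\<delta> * M + dV) * \<rho> y" by (simp add: algebra_simps)
    ultimately show "norm (weight p E y *\<^sub>R V y - weight p' E' y *\<^sub>R V' y) \<le> (\<delta> * M + dV) * \<rho> y"
      using b1 b2 by linarith
  qed (use int rho_integrable in \<open>auto intro: integrable_diff integrable_on_mult_right\<close>)
  then show ?thesis
    using integral_diff[OF int] rho_mass unfolding weighted_sum_def \<delta>_def by simp
qed

lemma norm_quotient_diff_le:
  fixes n n' :: "'b::real_normed_vector"
  assumes c: "c > 0" "a \<ge> c" "b \<ge> c" and n': "norm n' \<le> M * b"
  shows "norm ((1 / a) *\<^sub>R n - (1 / b) *\<^sub>R n') \<le> (norm (n - n') + M * \<bar>b - a\<bar>) / c"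
proof -
  have M: "norm n' / b \<le> M" using n' c by (simp add: pos_divide_le_eq)
  have "(1 / a) *\<^sub>R n - (1 / b) *\<^sub>R n' = (1 / a) *\<^sub>R (n - n') + (1 / a - 1 / b) *\<^sub>R n'"
    by (simp add: scaleR_diff_right scaleR_diff_left)
  also have "norm \<dots> \<le> norm (n - n') / a + \<bar>1 / a - 1 / b\<bar> * norm n'"
    using c norm_triangle_ineq[of "(1 / a) *\<^sub>R (n - n')" "(1 / a - 1 / b) *\<^sub>R n'"] by simp
  also have "\<dots> = norm (n - n') / a + (\<bar>b - a\<bar> / a) * (norm n' / b)"
    using c by (simp add: field_simps abs_divide abs_mult)
  also have "\<dots> \<le> norm (n - n') / a + (\<bar>b - a\<bar> / a) * M"
    using M c by (intro add_left_mono mult_left_mono) auto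
  also have "\<dots> = (norm (n - n') + M * \<bar>b - a\<bar>) / a" by (simp add: add_divide_distrib)
  also have "\<dots> \<le> (norm (n - n') + M * \<bar>b - a\<bar>) / c"
    using M c by (intro divide_left_mono) (auto intro!: add_nonneg_nonneg mult_nonneg_nonneg order_trans[OF _ M])
  finally show ?thesis .
qed

text \<open>Along positions bounded by \<open>B\<close> every total weight is at least \<open>\<psi>t (2 B)\<close>
  (\<open>total_weight_ge\<close>); this lower bound is what makes the quotient Lipschitz.\<close>
definition average_lip :: "real \<Rightarrow> real \<Rightarrow> real" where
  "average_lip B M = (2 * M * psi_lip + 1) / \<psi>t (2 * B)"

lemma average_lip_pos: "B \<ge> 0 \<Longrightarrow> M \<ge> 0 \<Longrightarrow> average_lip B M > 0"
  unfolding average_lip_def using psi_lip(1) assumption_A1_profile_pos[OF psi_A1, of "2 * B"]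
  by (intro divide_pos_pos) (auto intro!: add_nonneg_pos mult_nonneg_nonneg)

lemma average_lipschitz:
  assumes cE: "continuous_on \<Omega> E" and cE': "continuous_on \<Omega> E'"
    and cV: "continuous_on \<Omega> V" and cV': "continuous_on \<Omega> V'"
    and bE: "\<And>y. y \<in> \<Omega> \<Longrightarrow> norm (E y) \<le> B" and bE': "\<And>y. y \<in> \<Omega> \<Longrightarrow> norm (E' y) \<le> B"
    and bV: "\<And>y. y \<in> \<Omega> \<Longrightarrow> norm (V y) \<le> M" and bV': "\<And>y. y \<in> \<Omega> \<Longrightarrow> norm (V' y) \<le> M"
    and bp: "norm p \<le> B" and bp': "norm p' \<le> B"
    and dE: "\<And>y. y \<in> \<Omega> \<Longrightarrow> norm (E y - E' y) \<le> dE"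
    and dV: "\<And>y. y \<in> \<Omega> \<Longrightarrow> norm (V y - V' y) \<le> dV"
  shows "norm (average p E V - average p' E' V') \<le> average_lip B M * (norm (p - p') + dE + dV)"
proof -
  obtain y0 where y0: "y0 \<in> \<Omega>" using Omega_nonempty by blast
  have M0: "M \<ge> 0" using bV[OF y0] norm_ge_zero order_trans by blast
  have B0: "B \<ge> 0" using bp norm_ge_zero order_trans by blast
  have dE0: "dE \<ge> 0" using dE[OF y0] norm_ge_zero order_trans by blast
  have dV0: "dV \<ge> 0" using dV[OF y0] norm_ge_zero order_trans by blast
  define \<delta> where "\<delta> = psi_lip * (norm (p - p') + dE)"
  define c where "c = \<psi>t (2 * B)"
  have \<delta>0: "\<delta> \<ge> 0" unfolding \<delta>_def using psi_lip(1) dE0 by simp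
  have c0: "c > 0" unfolding c_def using assumption_A1_profile_pos[OF psi_A1] B0 by simp
  have "norm (average p E V - average p' E' V')
      \<le> (norm (weighted_sum p E V - weighted_sum p' E' V') + M * \<bar>total_weight p' E' - total_weight p E\<bar>) / c"
    unfolding average_def c_def
    by (intro norm_quotient_diff_le total_weight_ge[OF cE bE bp] total_weight_ge[OF cE' bE' bp']
        norm_weighted_sum_le[OF cE' cV' bV'] c0[unfolded c_def])
  also have "\<dots> \<le> (\<delta> * M + dV + M * \<delta>) / c"
    using weighted_sum_diff_le[OF cE cE' cV cV' bV bV' dE dV] total_weight_diff_le[OF cE cE' dE] M0 c0
    unfolding \<delta>_def by (intro divide_right_mono add_mono mult_left_mono) (auto simp: abs_minus_commute)
  also have "\<dots> \<le> average_lip B M * (norm (p - p') + dE + dV)"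
  proof -
    have "2 * M * \<delta> + dV \<le> (2 * M * psi_lip + 1) * (norm (p - p') + dE + dV)"
      using M0 psi_lip(1) dE0 dV0 unfolding \<delta>_def by (simp add: algebra_simps)
    then show ?thesis
      unfolding average_lip_def c_def[symmetric] using c0
      by (simp add: divide_right_mono algebra_simps)
  qed
  finally show ?thesis .
qed

end

section \<open>The Picard operator and its contraction estimate\<close>

locale alignment_history = alignment_weights +
  fixes \<tau> :: real and \<eta>h vh :: "real \<Rightarrow> 'a \<Rightarrow> 'a"
  assumes tau_pos: "\<tau> > 0"
    and continuous_history_pos: "continuous_on ({-\<tau>..0} \<times> closure \<Omega>) (\<lambda>(s, x). \<eta>h s x)"
    and continuous_history_vel: "continuous_on ({-\<tau>..0} \<times> closure \<Omega>) (\<lambda>(s, x). vh s x)"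
begin

lemma bdd_above_history_norm:
  assumes "continuous_on ({-\<tau>..0} \<times> closure \<Omega>) (\<lambda>(s, x). f s x)"
  shows "bdd_above ((\<lambda>p. norm (f (fst p) (snd p))) ` ({-\<tau>..0} \<times> closure \<Omega>))"
proof -
  have "bounded ((\<lambda>(s, x). f s x) ` ({-\<tau>..0} \<times> closure \<Omega>))"
    by (intro compact_imp_bounded compact_continuous_image assms compact_Times compact_Icc compact_closure_Omega)
  then obtain B where "\<forall>w\<in>(\<lambda>(s, x). f s x) ` ({-\<tau>..0} \<times> closure \<Omega>). norm w \<le> B"
    unfolding bounded_iff by blast
  then show ?thesis by (intro bdd_aboveI[where M = B]) force
qed

definition hist_vel_sup :: real where
  "hist_vel_sup = (SUP p\<in>{-\<tau>..0} \<times> \<Omega>. norm (vh (fst p) (snd p)))"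

definition hist_pos_sup :: real where
  "hist_pos_sup = (SUP p\<in>{-\<tau>..0} \<times> closure \<Omega>. norm (\<eta>h (fst p) (snd p)))"

lemma norm_history_vel_le:
  assumes s: "s \<in> {-\<tau>..0}" and y: "y \<in> closure \<Omega>"
  shows "norm (vh s y) \<le> hist_vel_sup"
proof (rule continuous_on_closure_norm_le[OF continuous_on_fixed_fst[OF continuous_history_vel s order_refl] _ y])
  have "(\<lambda>p. norm (vh (fst p) (snd p))) ` ({-\<tau>..0} \<times> \<Omega>)
      \<subseteq> (\<lambda>p. norm (vh (fst p) (snd p))) ` ({-\<tau>..0} \<times> closure \<Omega>)"
    using closure_subset by (intro image_mono) auto
  then have "bdd_above ((\<lambda>p. norm (vh (fst p) (snd p))) ` ({-\<tau>..0} \<times> \<Omega>))"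
    by (rule bdd_above_mono[OF bdd_above_history_norm[OF continuous_history_vel]])
  then show "\<forall>y\<in>\<Omega>. norm (vh s y) \<le> hist_vel_sup"
    unfolding hist_vel_sup_def using s by (auto intro!: cSUP_upper2)
qed

lemma norm_history_pos_le: "s \<in> {-\<tau>..0} \<Longrightarrow> y \<in> closure \<Omega> \<Longrightarrow> norm (\<eta>h s y) \<le> hist_pos_sup"
  unfolding hist_pos_sup_def
  by (rule cSUP_upper2[where x = "(s, y)", OF bdd_above_history_norm[OF continuous_history_pos]]) auto

lemma hist_sup_nonneg: "hist_vel_sup \<ge> 0" "hist_pos_sup \<ge> 0"
proof -
  obtain y where "y \<in> closure \<Omega>" using Omega_nonempty closure_subset by blast
  then have "norm (vh 0 y) \<le> hist_vel_sup" "norm (\<eta>h 0 y) \<le> hist_pos_sup"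
    using norm_history_vel_le norm_history_pos_le tau_pos by auto
  then show "hist_vel_sup \<ge> 0" "hist_pos_sup \<ge> 0" by (auto intro: order_trans[OF norm_ge_zero])
qed

definition delayed_average :: "(real \<Rightarrow> 'a \<Rightarrow> 'a) \<Rightarrow> (real \<Rightarrow> 'a \<Rightarrow> 'a) \<Rightarrow> real \<Rightarrow> 'a \<Rightarrow> 'a" where
  "delayed_average e v s x = average (e s x) (e (s - \<tau>)) (v (s - \<tau>))"

lemma delayed_average_minus_eq_align_rhs:
  "delayed_average e v t x - v t x = align_rhs \<tau> \<Omega> \<rho> \<psi> e v t x"
  unfolding delayed_average_def average_def total_weight_def weighted_sum_def weight_def[abs_def]
    align_rhs_def by simp

definition bounded_trajectory :: "real \<Rightarrow> real \<Rightarrow> real \<Rightarrow> (real \<Rightarrow> 'a \<Rightarrow> 'a) \<Rightarrow> (real \<Rightarrow> 'a \<Rightarrow> 'a) \<Rightarrow> bool"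
  where "bounded_trajectory T B M e v \<longleftrightarrow>
    continuous_on ({-\<tau>..T} \<times> closure \<Omega>) (\<lambda>(t, x). e t x) \<and>
    continuous_on ({-\<tau>..T} \<times> closure \<Omega>) (\<lambda>(t, x). v t x) \<and>
    (\<forall>t\<in>{-\<tau>..T}. \<forall>x\<in>closure \<Omega>. norm (e t x) \<le> B \<and> norm (v t x) \<le> M)"

lemma bounded_trajectoryD:
  assumes "bounded_trajectory T B M e v"
  shows "continuous_on ({-\<tau>..T} \<times> closure \<Omega>) (\<lambda>(t, x). e t x)"
    and "continuous_on ({-\<tau>..T} \<times> closure \<Omega>) (\<lambda>(t, x). v t x)"
    and "t \<in> {-\<tau>..T} \<Longrightarrow> x \<in> closure \<Omega> \<Longrightarrow> norm (e t x) \<le> B"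
    and "t \<in> {-\<tau>..T} \<Longrightarrow> x \<in> closure \<Omega> \<Longrightarrow> norm (v t x) \<le> M"
  using assms unfolding bounded_trajectory_def by auto

lemma bounded_trajectory_nonneg:
  assumes "bounded_trajectory T B M e v" "T \<ge> 0"
  shows "B \<ge> 0" "M \<ge> 0"
proof -
  obtain y where "y \<in> closure \<Omega>" using Omega_nonempty closure_subset by blast
  then have "norm (e 0 y) \<le> B" "norm (v 0 y) \<le> M"
    using bounded_trajectoryD(3,4)[OF assms(1), of 0 y] assms(2) tau_pos by auto
  then show "B \<ge> 0" "M \<ge> 0" by (auto intro: order_trans[OF norm_ge_zero])
qed

lemma bounded_trajectory_mono:
  "bounded_trajectory T B M e v \<Longrightarrow> B \<le> B' \<Longrightarrow> M \<le> M' \<Longrightarrow> bounded_trajectory T B' M' e v"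
  unfolding bounded_trajectory_def by force

lemma bounded_trajectory_slices:
  assumes "bounded_trajectory T B M e v" "t \<in> {-\<tau>..T}"
  shows "continuous_on \<Omega> (e t)" "continuous_on \<Omega> (v t)"
    "\<And>y. y \<in> \<Omega> \<Longrightarrow> norm (e t y) \<le> B" "\<And>y. y \<in> \<Omega> \<Longrightarrow> norm (v t y) \<le> M"
  using continuous_on_fixed_fst[OF bounded_trajectoryD(1)[OF assms(1)] assms(2) closure_subset]
    continuous_on_fixed_fst[OF bounded_trajectoryD(2)[OF assms(1)] assms(2) closure_subset]
    bounded_trajectoryD(3,4)[OF assms(1,2)] closure_subset by auto

lemma norm_delayed_average_diff_le:
  assumes tr1: "bounded_trajectory T B M e1 v1" and tr2: "bounded_trajectory T B M e2 v2"
    and s: "s1 \<in> {0..T}" "s2 \<in> {0..T}" and x: "x1 \<in> closure \<Omega>" "x2 \<in> closure \<Omega>"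
    and d0: "norm (e1 s1 x1 - e2 s2 x2) \<le> d0"
    and d1: "\<And>y. y \<in> \<Omega> \<Longrightarrow> norm (e1 (s1 - \<tau>) y - e2 (s2 - \<tau>) y) \<le> d1"
    and d2: "\<And>y. y \<in> \<Omega> \<Longrightarrow> norm (v1 (s1 - \<tau>) y - v2 (s2 - \<tau>) y) \<le> d2"
  shows "norm (delayed_average e1 v1 s1 x1 - delayed_average e2 v2 s2 x2) \<le> average_lip B M * (d0 + d1 + d2)"
proof -
  have st: "s1 - \<tau> \<in> {-\<tau>..T}" "s2 - \<tau> \<in> {-\<tau>..T}" "s1 \<in> {-\<tau>..T}" "s2 \<in> {-\<tau>..T}"
    using s tau_pos by auto
  note sl1 = bounded_trajectory_slices[OF tr1 st(1)] and sl2 = bounded_trajectory_slices[OF tr2 st(2)]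
  have "norm (delayed_average e1 v1 s1 x1 - delayed_average e2 v2 s2 x2)
      \<le> average_lip B M * (norm (e1 s1 x1 - e2 s2 x2) + d1 + d2)"
    unfolding delayed_average_def
    by (rule average_lipschitz[OF sl1(1) sl2(1) sl1(2) sl2(2) sl1(3) sl2(3) sl1(4) sl2(4)
          bounded_trajectoryD(3)[OF tr1 st(3) x(1)] bounded_trajectoryD(3)[OF tr2 st(4) x(2)] d1 d2])
  also have "\<dots> \<le> average_lip B M * (d0 + d1 + d2)"
    using d0 average_lip_pos bounded_trajectory_nonneg[OF tr1] s
    by (intro mult_left_mono less_imp_le[OF average_lip_pos]) auto
  finally show ?thesis .
qed

lemma norm_delayed_average_le:
  assumes "bounded_trajectory T B M e v" "s \<in> {0..T}" "x \<in> closure \<Omega>"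
  shows "norm (delayed_average e v s x) \<le> M"
proof -
  have st: "s - \<tau> \<in> {-\<tau>..T}" "s \<in> {-\<tau>..T}" using assms(2) tau_pos by auto
  note sl = bounded_trajectory_slices[OF assms(1) st(1)]
  show ?thesis unfolding delayed_average_def
    by (rule norm_average_le[OF sl(1,3) bounded_trajectoryD(3)[OF assms(1) st(2) assms(3)] sl(2,4)])
qed

lemma bounded_trajectory_uniformly_continuous:
  assumes tr: "bounded_trajectory T B M e v" and \<epsilon>: "\<epsilon> > 0"
  obtains d where "d > 0"
    "\<And>z z'. z \<in> {-\<tau>..T} \<times> closure \<Omega> \<Longrightarrow> z' \<in> {-\<tau>..T} \<times> closure \<Omega> \<Longrightarrow> dist z' z < d \<Longrightarrow>
      norm (e (fst z') (snd z') - e (fst z) (snd z)) \<le> \<epsilon> \<and> norm (v (fst z') (snd z') - v (fst z) (snd z)) \<le> \<epsilon>"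
proof -
  let ?S = "{-\<tau>..T} \<times> closure \<Omega>"
  have cmp: "compact ?S" by (intro compact_Times compact_Icc compact_closure_Omega)
  obtain d1 where d1: "d1 > 0" "\<forall>z\<in>?S. \<forall>z'\<in>?S. dist z' z < d1 \<longrightarrow> dist ((\<lambda>(t, x). e t x) z') ((\<lambda>(t, x). e t x) z) < \<epsilon>"
    using compact_uniformly_continuous[OF bounded_trajectoryD(1)[OF tr] cmp] \<epsilon>
    unfolding uniformly_continuous_on_def by metis
  obtain d2 where d2: "d2 > 0" "\<forall>z\<in>?S. \<forall>z'\<in>?S. dist z' z < d2 \<longrightarrow> dist ((\<lambda>(t, x). v t x) z') ((\<lambda>(t, x). v t x) z) < \<epsilon>"
    using compact_uniformly_continuous[OF bounded_trajectoryD(2)[OF tr] cmp] \<epsilon>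
    unfolding uniformly_continuous_on_def by metis
  show ?thesis
  proof (rule that[of "min d1 d2"])
    show "min d1 d2 > 0" using d1 d2 by simp
    fix z z' assume z: "z \<in> ?S" "z' \<in> ?S" "dist z' z < min d1 d2"
    then have "dist z' z < d1" "dist z' z < d2" by auto
    then have "dist ((\<lambda>(t, x). e t x) z') ((\<lambda>(t, x). e t x) z) < \<epsilon>"
      "dist ((\<lambda>(t, x). v t x) z') ((\<lambda>(t, x). v t x) z) < \<epsilon>"
      using d1(2) d2(2) z(1,2) by blast+
    then show "norm (e (fst z') (snd z') - e (fst z) (snd z)) \<le> \<epsilon> \<and> norm (v (fst z') (snd z') - v (fst z) (snd z)) \<le> \<epsilon>"
      by (simp add: dist_norm case_prod_beta)
  qed
qed

lemma continuous_on_delayed_average: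
  assumes tr: "bounded_trajectory T B M e v"
  shows "continuous_on ({0..T} \<times> closure \<Omega>) (\<lambda>(s, x). delayed_average e v s x)"
  unfolding continuous_on_iff
proof (intro ballI allI impI)
  fix z and \<epsilon> :: real assume z: "z \<in> {0..T} \<times> closure \<Omega>" and \<epsilon>: "\<epsilon> > 0"
  obtain s x where sx: "z = (s, x)" "s \<in> {0..T}" "x \<in> closure \<Omega>" using z by auto
  define L where "L = average_lip B M"
  have L: "L > 0"
    unfolding L_def using average_lip_pos bounded_trajectory_nonneg[OF tr] sx by auto
  define \<epsilon>' where "\<epsilon>' = \<epsilon> / (3 * L + 3)"
  have \<epsilon>': "\<epsilon>' > 0" unfolding \<epsilon>'_def using \<epsilon> L by simp
  obtain d where d: "d > 0" and
    close: "\<And>z z'. z \<in> {-\<tau>..T} \<times> closure \<Omega> \<Longrightarrow> z' \<in> {-\<tau>..T} \<times> closure \<Omega> \<Longrightarrow> dist z' z < d \<Longrightarrow>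
      norm (e (fst z') (snd z') - e (fst z) (snd z)) \<le> \<epsilon>' \<and> norm (v (fst z') (snd z') - v (fst z) (snd z)) \<le> \<epsilon>'"
    using bounded_trajectory_uniformly_continuous[OF tr \<epsilon>'] by blast
  show "\<exists>d>0. \<forall>z'\<in>{0..T} \<times> closure \<Omega>. dist z' z < d \<longrightarrow>
      dist ((\<lambda>(s, x). delayed_average e v s x) z') ((\<lambda>(s, x). delayed_average e v s x) z) < \<epsilon>"
  proof (intro exI[of _ d] conjI ballI impI d)
    fix z' assume z': "z' \<in> {0..T} \<times> closure \<Omega>" and dz: "dist z' z < d"
    obtain s' x' where sx': "z' = (s', x')" "s' \<in> {0..T}" "x' \<in> closure \<Omega>" using z' by auto
    have "dist s' s < d" using dz dist_fst_le[of z' z] sx sx' by simp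
    then have dy: "dist (s' - \<tau>, y) (s - \<tau>, y) < d" for y by (simp add: dist_Pair_Pair dist_real_def)
    have delayed: "norm (e (s' - \<tau>) y - e (s - \<tau>) y) \<le> \<epsilon>' \<and> norm (v (s' - \<tau>) y - v (s - \<tau>) y) \<le> \<epsilon>'"
      if "y \<in> \<Omega>" for y
    proof -
      have "(s - \<tau>, y) \<in> {-\<tau>..T} \<times> closure \<Omega>" "(s' - \<tau>, y) \<in> {-\<tau>..T} \<times> closure \<Omega>"
        using sx sx' tau_pos that closure_subset by auto
      then show ?thesis using close[of "(s - \<tau>, y)" "(s' - \<tau>, y)"] dy[of y] by simp
    qed
    have "z \<in> {-\<tau>..T} \<times> closure \<Omega>" "z' \<in> {-\<tau>..T} \<times> closure \<Omega>" using z z' tau_pos by auto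
    then have "norm (e s' x' - e s x) \<le> \<epsilon>'" using close[of z z'] dz sx sx' by simp
    then have "norm (delayed_average e v s' x' - delayed_average e v s x) \<le> L * (\<epsilon>' + \<epsilon>' + \<epsilon>')"
      unfolding L_def
      by (rule norm_delayed_average_diff_le[OF tr tr sx'(2) sx(2) sx'(3) sx(3)]) (use delayed in blast)+
    also have "\<dots> = (3 * L) * \<epsilon> / (3 * L + 3)" unfolding \<epsilon>'_def by simp
    also have "\<dots> < \<epsilon>" using \<epsilon> L by (simp add: divide_less_eq)
    finally show "dist ((\<lambda>(s, x). delayed_average e v s x) z') ((\<lambda>(s, x). delayed_average e v s x) z) < \<epsilon>"
      using sx sx' by (simp add: dist_norm)
  qed
qed

definition picard_pos :: "(real \<Rightarrow> 'a \<Rightarrow> 'a) \<Rightarrow> real \<Rightarrow> 'a \<Rightarrow> 'a" where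
  "picard_pos v t x = (if t \<le> 0 then \<eta>h t x else \<eta>h 0 x + integral {0..t} (\<lambda>s. v s x))"

text \<open>Variation of constants for \<open>v' = G - v\<close>, with \<open>G\<close> the delayed average; unlike the plain
  integral form it keeps \<open>v\<close> a convex combination of values of \<open>vh 0\<close> and \<open>G\<close>.\<close>
definition picard_vel :: "(real \<Rightarrow> 'a \<Rightarrow> 'a) \<Rightarrow> (real \<Rightarrow> 'a \<Rightarrow> 'a) \<Rightarrow> real \<Rightarrow> 'a \<Rightarrow> 'a" where
  "picard_vel e v t x = (if t \<le> 0 then vh t x
     else exp (-t) *\<^sub>R (vh 0 x + integral {0..t} (\<lambda>s. exp s *\<^sub>R delayed_average e v s x)))"

lemma picard_pos_nonneg: "t \<ge> 0 \<Longrightarrow> picard_pos v t x = \<eta>h 0 x + integral {0..t} (\<lambda>s. v s x)"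
  unfolding picard_pos_def by auto

lemma picard_vel_nonneg:
  "t \<ge> 0 \<Longrightarrow> picard_vel e v t x = exp (-t) *\<^sub>R (vh 0 x + integral {0..t} (\<lambda>s. exp s *\<^sub>R delayed_average e v s x))"
  unfolding picard_vel_def by auto

lemma continuous_on_history_at_0:
  "continuous_on (A \<times> closure \<Omega>) (\<lambda>z. \<eta>h 0 (snd z))" "continuous_on (A \<times> closure \<Omega>) (\<lambda>z. vh 0 (snd z))"
  using tau_pos
  by (auto intro!: continuous_on_compose2[OF continuous_on_fixed_fst[OF continuous_history_pos _ order_refl]]
      continuous_on_compose2[OF continuous_on_fixed_fst[OF continuous_history_vel _ order_refl]]
      continuous_intros)

lemma continuous_on_exp_delayed_average:
  assumes "bounded_trajectory T B M e v"
  shows "continuous_on ({0..T} \<times> closure \<Omega>) (\<lambda>(s, x). exp s *\<^sub>R delayed_average e v s x)"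
proof -
  have "continuous_on ({0..T} \<times> closure \<Omega>) (\<lambda>z. exp (fst z) *\<^sub>R (\<lambda>(s, x). delayed_average e v s x) z)"
    by (intro continuous_intros continuous_on_delayed_average[OF assms])
  then show ?thesis by (simp add: case_prod_beta)
qed

lemma integrable_exp_delayed_average:
  assumes "bounded_trajectory T B M e v" "t \<in> {0..T}" "x \<in> closure \<Omega>"
  shows "(\<lambda>s. exp s *\<^sub>R delayed_average e v s x) integrable_on {0..t}"
  using continuous_on_fixed_snd[OF continuous_on_exp_delayed_average[OF assms(1)] assms(3)] assms(2)
  by (intro integrable_continuous_real) auto

lemma continuous_on_picard:
  assumes T: "T \<ge> 0" and tr: "bounded_trajectory T B M e v"
  shows "continuous_on ({-\<tau>..T} \<times> closure \<Omega>) (\<lambda>(t, x). picard_pos v t x)"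
    and "continuous_on ({-\<tau>..T} \<times> closure \<Omega>) (\<lambda>(t, x). picard_vel e v t x)"
proof -
  have "continuous_on ({0..T} \<times> closure \<Omega>) (\<lambda>(s, x). v s x)"
    by (rule continuous_on_subset[OF bounded_trajectoryD(2)[OF tr]]) (use tau_pos in auto)
  then have "continuous_on ({0..T} \<times> closure \<Omega>)
      (\<lambda>z. \<eta>h 0 (snd z) + (\<lambda>(t, x). integral {0..t} (\<lambda>s. v s x)) z)"
    by (intro continuous_intros continuous_on_integral_upper_limit continuous_on_history_at_0)
  then show "continuous_on ({-\<tau>..T} \<times> closure \<Omega>) (\<lambda>(t, x). picard_pos v t x)"
    unfolding picard_pos_def
    by (intro continuous_on_if_nonpos continuous_history_pos) (use T tau_pos in \<open>auto simp: case_prod_beta\<close>)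
  have "continuous_on ({0..T} \<times> closure \<Omega>) (\<lambda>z. exp (- fst z) *\<^sub>R (vh 0 (snd z) +
      (\<lambda>(t, x). integral {0..t} (\<lambda>s. exp s *\<^sub>R delayed_average e v s x)) z))"
    by (intro continuous_intros continuous_on_integral_upper_limit continuous_on_history_at_0
        continuous_on_exp_delayed_average[OF tr])
  then show "continuous_on ({-\<tau>..T} \<times> closure \<Omega>) (\<lambda>(t, x). picard_vel e v t x)"
    unfolding picard_vel_def
    by (intro continuous_on_if_nonpos continuous_history_vel) (use T tau_pos in \<open>auto simp: case_prod_beta\<close>)
qed

definition pos_bound :: "real \<Rightarrow> real" where
  "pos_bound T = hist_pos_sup + hist_vel_sup * T"

lemma norm_picard_pos_le:
  assumes T: "T \<ge> 0" and tr: "bounded_trajectory T B hist_vel_sup e v"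
    and t: "t \<in> {-\<tau>..T}" and x: "x \<in> closure \<Omega>"
  shows "norm (picard_pos v t x) \<le> pos_bound T"
proof (cases "t \<le> 0")
  case True
  then show ?thesis
    using norm_history_pos_le[of t x] t x mult_nonneg_nonneg[OF hist_sup_nonneg(1) T]
    unfolding picard_pos_def pos_bound_def by auto
next
  case False
  then have t0: "0 \<le> t" "t \<le> T" using t by auto
  have "continuous_on {0..t} (\<lambda>s. v s x)"
    using continuous_on_fixed_snd[OF bounded_trajectoryD(2)[OF tr] x] t0 tau_pos by auto
  then have "norm (integral {0..t} (\<lambda>s. v s x)) \<le> hist_vel_sup * t^Suc 0 / Suc 0"
    by (intro norm_integral_le_mult_power integrable_continuous_real t0(1))
      (use bounded_trajectoryD(4)[OF tr] t0 x tau_pos in auto)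
  then have "norm (picard_pos v t x) \<le> hist_pos_sup + hist_vel_sup * t"
    using norm_history_pos_le[of 0 x] x tau_pos t0 unfolding picard_pos_nonneg[OF t0(1)]
    by (auto intro: order_trans[OF norm_triangle_ineq])
  also have "\<dots> \<le> pos_bound T"
    unfolding pos_bound_def using t0 hist_sup_nonneg by (simp add: mult_left_mono)
  finally show ?thesis .
qed

lemma norm_picard_vel_le:
  assumes tr: "bounded_trajectory T B hist_vel_sup e v" and t: "t \<in> {-\<tau>..T}" and x: "x \<in> closure \<Omega>"
  shows "norm (picard_vel e v t x) \<le> hist_vel_sup"
proof (cases "t \<le> 0")
  case True
  then show ?thesis using norm_history_vel_le[of t x] t x unfolding picard_vel_def by auto
next
  case False
  then have t0: "0 \<le> t" "t \<le> T" using t by auto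
  have "norm (integral {0..t} (\<lambda>s. exp s *\<^sub>R delayed_average e v s x)) \<le> integral {0..t} (\<lambda>s. hist_vel_sup * exp s)"
  proof (rule integral_norm_bound_integral[OF integrable_exp_delayed_average[OF tr _ x]])
    fix s assume "s \<in> {0..t}"
    then show "norm (exp s *\<^sub>R delayed_average e v s x) \<le> hist_vel_sup * exp s"
      using norm_delayed_average_le[OF tr _ x, of s] t0 by (simp add: mult.commute)
  qed (use t0 in \<open>auto intro!: integrable_continuous_real continuous_intros\<close>)
  also have "\<dots> = hist_vel_sup * (exp t - 1)" using t0 by simp
  finally have "norm (vh 0 x + integral {0..t} (\<lambda>s. exp s *\<^sub>R delayed_average e v s x))
      \<le> hist_vel_sup + hist_vel_sup * (exp t - 1)"
    using norm_history_vel_le[of 0 x] x tau_pos by (auto intro: order_trans[OF norm_triangle_ineq])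
  then have "norm (picard_vel e v t x) \<le> exp (-t) * (hist_vel_sup + hist_vel_sup * (exp t - 1))"
    unfolding picard_vel_nonneg[OF t0(1)] by (simp add: mult_left_mono)
  also have "\<dots> = hist_vel_sup" by (simp add: algebra_simps exp_minus field_simps)
  finally show ?thesis .
qed

lemma bounded_trajectory_picard:
  assumes "T \<ge> 0" "bounded_trajectory T (pos_bound T) hist_vel_sup e v"
  shows "bounded_trajectory T (pos_bound T) hist_vel_sup (picard_pos v) (picard_vel e v)"
  unfolding bounded_trajectory_def
  using continuous_on_picard[OF assms] norm_picard_pos_le[OF assms] norm_picard_vel_le[OF assms(2)]
  by blast

lemma norm_picard_pos_diff_le:
  assumes tr1: "bounded_trajectory T B M e1 v1" and tr2: "bounded_trajectory T B M e2 v2"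
    and t: "t \<in> {0..T}" and x: "x \<in> closure \<Omega>"
    and d: "\<And>s. s \<in> {0..t} \<Longrightarrow> norm (v1 s x - v2 s x) \<le> c * s^m"
  shows "norm (picard_pos v1 t x - picard_pos v2 t x) \<le> c * t^Suc m / Suc m"
proof -
  have sub: "{0..t} \<subseteq> {-\<tau>..T}" using t tau_pos by auto
  have int: "(\<lambda>s. v1 s x) integrable_on {0..t}" "(\<lambda>s. v2 s x) integrable_on {0..t}"
    using continuous_on_fixed_snd[OF bounded_trajectoryD(2)[OF tr1] x sub]
      continuous_on_fixed_snd[OF bounded_trajectoryD(2)[OF tr2] x sub]
    by (auto intro: integrable_continuous_real)
  have "norm (integral {0..t} (\<lambda>s. v1 s x - v2 s x)) \<le> c * t^Suc m / Suc m"
    using int t d by (intro norm_integral_le_mult_power integrable_diff) auto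
  then show ?thesis
    using integral_diff[OF int] t by (simp add: picard_pos_nonneg)
qed

lemma norm_picard_vel_diff_le:
  assumes tr1: "bounded_trajectory T B M e1 v1" and tr2: "bounded_trajectory T B M e2 v2"
    and t: "t \<in> {0..T}" and x: "x \<in> closure \<Omega>"
    and d: "\<And>s. s \<in> {0..t} \<Longrightarrow> norm (delayed_average e1 v1 s x - delayed_average e2 v2 s x) \<le> k * s^m"
  shows "norm (picard_vel e1 v1 t x - picard_vel e2 v2 t x) \<le> k * t^Suc m / Suc m"
proof -
  let ?g = "\<lambda>e v s. exp s *\<^sub>R delayed_average e v s x"
  note int = integrable_exp_delayed_average[OF tr1 t x] integrable_exp_delayed_average[OF tr2 t x]
  have "norm (?g e1 v1 s - ?g e2 v2 s) \<le> (exp t * k) * s^m" if s: "s \<in> {0..t}" for s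
  proof -
    have "exp s * norm (delayed_average e1 v1 s x - delayed_average e2 v2 s x) \<le> exp t * (k * s^m)"
      using d[OF s] s by (intro mult_mono) (auto intro: order_trans[OF norm_ge_zero])
    then show ?thesis by (simp add: scaleR_diff_right[symmetric] mult.assoc)
  qed
  then have "norm (integral {0..t} (\<lambda>s. ?g e1 v1 s - ?g e2 v2 s)) \<le> exp t * k * t^Suc m / Suc m"
    using t by (intro norm_integral_le_mult_power integrable_diff int) auto
  moreover have "picard_vel e1 v1 t x - picard_vel e2 v2 t x
      = exp (-t) *\<^sub>R integral {0..t} (\<lambda>s. ?g e1 v1 s - ?g e2 v2 s)"
    using t unfolding integral_diff[OF int] by (simp add: picard_vel_nonneg scaleR_diff_right[symmetric])
  ultimately show ?thesis by (simp add: exp_minus field_simps)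
qed

definition pair_dist :: "(real \<Rightarrow> 'a \<Rightarrow> 'a) \<Rightarrow> (real \<Rightarrow> 'a \<Rightarrow> 'a) \<Rightarrow> (real \<Rightarrow> 'a \<Rightarrow> 'a) \<Rightarrow> (real \<Rightarrow> 'a \<Rightarrow> 'a)
    \<Rightarrow> real \<Rightarrow> 'a \<Rightarrow> real" where
  "pair_dist e v e' v' t x = norm (e t x - e' t x) + norm (v t x - v' t x)"

lemma pair_dist_nonneg: "pair_dist e v e' v' t x \<ge> 0"
  unfolding pair_dist_def by simp

lemma pair_dist_leD:
  assumes "pair_dist e v e' v' t x \<le> r"
  shows "norm (e t x - e' t x) \<le> r" "norm (v t x - v' t x) \<le> r"
  using assms norm_ge_zero[of "e t x - e' t x"] norm_ge_zero[of "v t x - v' t x"]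
  unfolding pair_dist_def by linarith+

lemma pair_dist_le_bounds:
  assumes "bounded_trajectory T B M e v" "bounded_trajectory T B M e' v'" "t \<in> {-\<tau>..T}" "x \<in> closure \<Omega>"
  shows "pair_dist e v e' v' t x \<le> 2 * B + 2 * M"
  using bounded_trajectoryD(3,4)[OF assms(1,3,4)] bounded_trajectoryD(3,4)[OF assms(2,3,4)]
    norm_triangle_ineq4[of "e t x" "e' t x"] norm_triangle_ineq4[of "v t x" "v' t x"]
  unfolding pair_dist_def by linarith

lemma pair_dist_delayed_le:
  assumes hist: "\<And>s y. s \<in> {-\<tau>..0} \<Longrightarrow> y \<in> \<Omega> \<Longrightarrow> e1 s y = e2 s y \<and> v1 s y = v2 s y"
    and c: "c \<ge> 0" and hyp: "\<And>s y. s \<in> {0..T} \<Longrightarrow> y \<in> \<Omega> \<Longrightarrow> pair_dist e1 v1 e2 v2 s y \<le> c * s^m"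
    and s: "s \<in> {0..T}" and y: "y \<in> \<Omega>"
  shows "pair_dist e1 v1 e2 v2 (s - \<tau>) y \<le> c * s^m"
proof (cases "s - \<tau> \<le> 0")
  case True
  then show ?thesis using hist[of "s - \<tau>" y] c s y unfolding pair_dist_def by simp
next
  case False
  then have "pair_dist e1 v1 e2 v2 (s - \<tau>) y \<le> c * (s - \<tau>)^m" using hyp[of "s - \<tau>" y] s y tau_pos by auto
  also have "\<dots> \<le> c * s^m" using False tau_pos c by (intro mult_left_mono power_mono) auto
  finally show ?thesis .
qed

text \<open>The hypothesis is only needed at the label \<open>x\<close> and on \<open>\<Omega>\<close>, where the delayed average
  samples the trajectories: \<open>X = closure \<Omega>\<close> serves the iteration, \<open>X = \<Omega>\<close> the uniqueness proof,
  where the equation is only known on \<open>\<Omega>\<close>.\<close>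
lemma picard_contraction:
  assumes tr1: "bounded_trajectory T B M e1 v1" and tr2: "bounded_trajectory T B M e2 v2"
    and hist: "\<And>s y. s \<in> {-\<tau>..0} \<Longrightarrow> y \<in> \<Omega> \<Longrightarrow> e1 s y = e2 s y \<and> v1 s y = v2 s y"
    and X: "\<Omega> \<subseteq> X" "X \<subseteq> closure \<Omega>" and c: "c \<ge> 0"
    and hyp: "\<And>s y. s \<in> {0..T} \<Longrightarrow> y \<in> X \<Longrightarrow> pair_dist e1 v1 e2 v2 s y \<le> c * s^m"
    and t: "t \<in> {0..T}" and x: "x \<in> X"
  shows "pair_dist (picard_pos v1) (picard_vel e1 v1) (picard_pos v2) (picard_vel e2 v2) t x
    \<le> (1 + 3 * average_lip B M) * c * t^Suc m / Suc m"
proof -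
  define L where "L = average_lip B M"
  have xc: "x \<in> closure \<Omega>" using x X by auto
  have hyp_x: "norm (e1 s x - e2 s x) \<le> c * s^m" "norm (v1 s x - v2 s x) \<le> c * s^m"
    if "s \<in> {0..t}" for s
    using pair_dist_leD[OF hyp[of s x]] that t x by auto
  have hyp_delayed: "pair_dist e1 v1 e2 v2 (s - \<tau>) y \<le> c * s^m" if "s \<in> {0..T}" "y \<in> \<Omega>" for s y
    by (rule pair_dist_delayed_le[where T = T]) (use hist c hyp X that in auto)
  have "norm (delayed_average e1 v1 s x - delayed_average e2 v2 s x) \<le> (3 * L * c) * s^m"
    if "s \<in> {0..t}" for s
  proof -
    have "norm (delayed_average e1 v1 s x - delayed_average e2 v2 s x) \<le> L * (c * s^m + c * s^m + c * s^m)"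
      unfolding L_def using that t hyp_x(1)[OF that] pair_dist_leD[OF hyp_delayed]
      by (intro norm_delayed_average_diff_le[OF tr1 tr2 _ _ xc xc]) auto
    then show ?thesis by (simp add: algebra_simps)
  qed
  then have "norm (picard_vel e1 v1 t x - picard_vel e2 v2 t x) \<le> 3 * L * c * t^Suc m / Suc m"
    by (rule norm_picard_vel_diff_le[OF tr1 tr2 t xc])
  moreover have "norm (picard_pos v1 t x - picard_pos v2 t x) \<le> c * t^Suc m / Suc m"
    by (rule norm_picard_pos_diff_le[OF tr1 tr2 t xc hyp_x(2)])
  moreover have "(1 + 3 * L) * c * t^Suc m / Suc m = c * t^Suc m / Suc m + 3 * L * c * t^Suc m / Suc m"
    by (simp add: distrib_right add_divide_distrib)
  ultimately show ?thesis
    unfolding pair_dist_def L_def[symmetric] by linarith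
qed

section \<open>Existence: convergence of the Picard iterates\<close>

primrec iterate :: "nat \<Rightarrow> (real \<Rightarrow> 'a \<Rightarrow> 'a) \<times> (real \<Rightarrow> 'a \<Rightarrow> 'a)" where
  "iterate 0 = (\<lambda>t x. if t \<le> 0 then \<eta>h t x else \<eta>h 0 x, \<lambda>t x. if t \<le> 0 then vh t x else vh 0 x)"
| "iterate (Suc n) = (picard_pos (snd (iterate n)), picard_vel (fst (iterate n)) (snd (iterate n)))"

definition iter_pos :: "nat \<Rightarrow> real \<Rightarrow> 'a \<Rightarrow> 'a" where "iter_pos n = fst (iterate n)"
definition iter_vel :: "nat \<Rightarrow> real \<Rightarrow> 'a \<Rightarrow> 'a" where "iter_vel n = snd (iterate n)"

lemma iter_Suc:
  "iter_pos (Suc n) = picard_pos (iter_vel n)" "iter_vel (Suc n) = picard_vel (iter_pos n) (iter_vel n)"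
  unfolding iter_pos_def iter_vel_def by simp_all

lemma iter_history: "t \<le> 0 \<Longrightarrow> iter_pos n t x = \<eta>h t x \<and> iter_vel n t x = vh t x"
  by (cases n) (simp_all add: iter_pos_def iter_vel_def picard_pos_def picard_vel_def)

lemma bounded_trajectory_iterate:
  assumes T: "T \<ge> 0"
  shows "bounded_trajectory T (pos_bound T) hist_vel_sup (iter_pos n) (iter_vel n)"
proof (induction n)
  case 0
  have "continuous_on ({-\<tau>..T} \<times> closure \<Omega>) (\<lambda>(t, x). if t \<le> 0 then \<eta>h t x else \<eta>h 0 x)"
    "continuous_on ({-\<tau>..T} \<times> closure \<Omega>) (\<lambda>(t, x). if t \<le> 0 then vh t x else vh 0 x)"
    by (intro continuous_on_if_nonpos continuous_history_pos continuous_history_vel;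
        use continuous_on_history_at_0[of "{0..T}"] T tau_pos in \<open>auto simp: case_prod_beta\<close>)+
  moreover have "norm (\<eta>h t x) \<le> pos_bound T" "norm (vh t x) \<le> hist_vel_sup"
    if "t \<in> {-\<tau>..0}" "x \<in> closure \<Omega>" for t x
    using norm_history_pos_le[OF that] norm_history_vel_le[OF that] hist_sup_nonneg T
    unfolding pos_bound_def by (auto intro: add_increasing2)
  ultimately show ?case
    using tau_pos unfolding bounded_trajectory_def iter_pos_def iter_vel_def by auto
next
  case (Suc n)
  then show ?case unfolding iter_Suc by (rule bounded_trajectory_picard[OF T])
qed

definition picard_rate :: "real \<Rightarrow> real" where
  "picard_rate T = 1 + 3 * average_lip (pos_bound T) hist_vel_sup"

lemma picard_rate_pos: "T \<ge> 0 \<Longrightarrow> picard_rate T > 0"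
  unfolding picard_rate_def using average_lip_pos hist_sup_nonneg
  by (simp add: add_pos_nonneg less_imp_le pos_bound_def)

lemma iterate_pair_dist_le_power:
  assumes T: "T \<ge> 0" and t: "t \<in> {0..T}" and x: "x \<in> closure \<Omega>"
  shows "pair_dist (iter_pos (Suc n)) (iter_vel (Suc n)) (iter_pos n) (iter_vel n) t x
    \<le> (2 * pos_bound T + 2 * hist_vel_sup) * (picard_rate T * t)^n / fact n"
proof (rule picard_factorial_bound[OF _ _ _ _ t x])
  note tr = bounded_trajectory_iterate[OF T]
  show "picard_rate T \<ge> 0" "2 * pos_bound T + 2 * hist_vel_sup \<ge> 0"
    using hist_sup_nonneg T picard_rate_pos[OF T] by (auto simp: pos_bound_def)
  fix s y assume "s \<in> {0..T}" "y \<in> closure \<Omega>"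
  then show "pair_dist (iter_pos (Suc 0)) (iter_vel (Suc 0)) (iter_pos 0) (iter_vel 0) s y
      \<le> 2 * pos_bound T + 2 * hist_vel_sup"
    using tau_pos by (intro pair_dist_le_bounds[OF tr tr]) auto
next
  note tr = bounded_trajectory_iterate[OF T]
  fix k c m t x
  assume "c \<ge> 0" "t \<in> {0..T}" "x \<in> closure \<Omega>"
    and "\<And>s y. s \<in> {0..T} \<Longrightarrow> y \<in> closure \<Omega> \<Longrightarrow>
      pair_dist (iter_pos (Suc k)) (iter_vel (Suc k)) (iter_pos k) (iter_vel k) s y \<le> c * s^m"
  then have "pair_dist (picard_pos (iter_vel (Suc k))) (picard_vel (iter_pos (Suc k)) (iter_vel (Suc k)))
      (picard_pos (iter_vel k)) (picard_vel (iter_pos k) (iter_vel k)) t x \<le> picard_rate T * c * t^Suc m / Suc m"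
    unfolding picard_rate_def
    by (intro picard_contraction[OF tr tr, where X = "closure \<Omega>"])
      (auto simp: iter_history intro: closure_subset[THEN subsetD])
  then show "pair_dist (iter_pos (Suc (Suc k))) (iter_vel (Suc (Suc k))) (iter_pos (Suc k)) (iter_vel (Suc k)) t x
      \<le> picard_rate T * c * t^Suc m / Suc m"
    by (simp only: iter_Suc)
qed

lemma iterate_pair_dist_le:
  assumes T: "T \<ge> 0" and t: "t \<in> {-\<tau>..T}" and x: "x \<in> closure \<Omega>"
  shows "pair_dist (iter_pos (Suc n)) (iter_vel (Suc n)) (iter_pos n) (iter_vel n) t x
    \<le> (2 * pos_bound T + 2 * hist_vel_sup) * (picard_rate T * T)^n / fact n"
proof (cases "t \<le> 0")
  case True
  have "0 \<le> (2 * pos_bound T + 2 * hist_vel_sup) * (picard_rate T * T)^n / fact n"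
    using hist_sup_nonneg T picard_rate_pos[OF T] by (simp add: pos_bound_def)
  then show ?thesis using True unfolding pair_dist_def by (simp add: iter_history)
next
  case False
  then have "pair_dist (iter_pos (Suc n)) (iter_vel (Suc n)) (iter_pos n) (iter_vel n) t x
      \<le> (2 * pos_bound T + 2 * hist_vel_sup) * (picard_rate T * t)^n / fact n"
    using iterate_pair_dist_le_power[OF T _ x] t by auto
  also have "\<dots> \<le> (2 * pos_bound T + 2 * hist_vel_sup) * (picard_rate T * T)^n / fact n"
    using False t hist_sup_nonneg T picard_rate_pos[OF T]
    by (intro divide_right_mono mult_left_mono power_mono) (auto simp: pos_bound_def)
  finally show ?thesis .
qed

definition lim_pos :: "real \<Rightarrow> 'a \<Rightarrow> 'a" where "lim_pos t x = lim (\<lambda>n. iter_pos n t x)"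
definition lim_vel :: "real \<Rightarrow> 'a \<Rightarrow> 'a" where "lim_vel t x = lim (\<lambda>n. iter_vel n t x)"

lemma uniform_limit_iterate:
  assumes T: "T \<ge> 0"
  shows "uniform_limit ({-\<tau>..T} \<times> closure \<Omega>) (\<lambda>n (t, x). iter_pos n t x) (\<lambda>(t, x). lim_pos t x) sequentially"
    and "uniform_limit ({-\<tau>..T} \<times> closure \<Omega>) (\<lambda>n (t, x). iter_vel n t x) (\<lambda>(t, x). lim_vel t x) sequentially"
proof -
  define b where "b n = (2 * pos_bound T + 2 * hist_vel_sup) * (picard_rate T * T)^n / fact n" for n
  have b: "summable b" unfolding b_def by (rule summable_exp_series)
  have d: "norm (iter_pos (Suc n) t x - iter_pos n t x) \<le> b n" "norm (iter_vel (Suc n) t x - iter_vel n t x) \<le> b n"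
    if "(t, x) \<in> {-\<tau>..T} \<times> closure \<Omega>" for n t x
    using pair_dist_leD[OF iterate_pair_dist_le[OF T]] that unfolding b_def by auto
  have "(\<lambda>(t, x). lim_pos t x) = (\<lambda>z. lim (\<lambda>n. (\<lambda>(t, x). iter_pos n t x) z))"
    by (auto simp: fun_eq_iff lim_pos_def)
  then show "uniform_limit ({-\<tau>..T} \<times> closure \<Omega>) (\<lambda>n (t, x). iter_pos n t x) (\<lambda>(t, x). lim_pos t x) sequentially"
    by (simp only:) (rule uniform_limit_summable_differences[OF b], use d in auto)
  have "(\<lambda>(t, x). lim_vel t x) = (\<lambda>z. lim (\<lambda>n. (\<lambda>(t, x). iter_vel n t x) z))"
    by (auto simp: fun_eq_iff lim_vel_def)
  then show "uniform_limit ({-\<tau>..T} \<times> closure \<Omega>) (\<lambda>n (t, x). iter_vel n t x) (\<lambda>(t, x). lim_vel t x) sequentially"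
    by (simp only:) (rule uniform_limit_summable_differences[OF b], use d in auto)
qed

lemma tendsto_iterate:
  assumes "t \<ge> -\<tau>" "x \<in> closure \<Omega>"
  shows "(\<lambda>n. iter_pos n t x) \<longlonglongrightarrow> lim_pos t x" "(\<lambda>n. iter_vel n t x) \<longlonglongrightarrow> lim_vel t x"
  using tendsto_uniform_limitI[OF uniform_limit_iterate(1)[of "max t 0"], of "(t, x)"]
    tendsto_uniform_limitI[OF uniform_limit_iterate(2)[of "max t 0"], of "(t, x)"] assms
  by auto

lemma lim_history: "t \<le> 0 \<Longrightarrow> lim_pos t x = \<eta>h t x \<and> lim_vel t x = vh t x"
  unfolding lim_pos_def lim_vel_def by (simp add: iter_history limI[OF tendsto_const])

lemma bounded_trajectory_lim:
  assumes T: "T \<ge> 0"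
  shows "bounded_trajectory T (pos_bound T) hist_vel_sup lim_pos lim_vel"
  unfolding bounded_trajectory_def
proof (intro conjI ballI)
  note tr = bounded_trajectory_iterate[OF T]
  show "continuous_on ({-\<tau>..T} \<times> closure \<Omega>) (\<lambda>(t, x). lim_pos t x)"
    by (rule uniform_limit_theorem[OF _ uniform_limit_iterate(1)[OF T]])
      (auto intro: always_eventually bounded_trajectoryD(1)[OF tr])
  show "continuous_on ({-\<tau>..T} \<times> closure \<Omega>) (\<lambda>(t, x). lim_vel t x)"
    by (rule uniform_limit_theorem[OF _ uniform_limit_iterate(2)[OF T]])
      (auto intro: always_eventually bounded_trajectoryD(2)[OF tr])
  fix t x assume t: "t \<in> {-\<tau>..T}" and x: "x \<in> closure \<Omega>"
  show "norm (lim_pos t x) \<le> pos_bound T"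
    using Lim_norm_ubound[OF _ tendsto_iterate(1)] bounded_trajectoryD(3)[OF tr t x] t x by auto
  show "norm (lim_vel t x) \<le> hist_vel_sup"
    using Lim_norm_ubound[OF _ tendsto_iterate(2)] bounded_trajectoryD(4)[OF tr t x] t x by auto
qed

lemma eventually_iterate_close:
  assumes T: "T \<ge> 0" and \<epsilon>: "\<epsilon> > 0"
  shows "\<forall>\<^sub>F n in sequentially. \<forall>s\<in>{0..T}. \<forall>y\<in>closure \<Omega>.
    pair_dist (iter_pos n) (iter_vel n) lim_pos lim_vel s y \<le> \<epsilon>"
proof -
  have "\<epsilon> / 2 > 0" using \<epsilon> by simp
  from uniform_limitD[OF uniform_limit_iterate(1)[OF T] this] uniform_limitD[OF uniform_limit_iterate(2)[OF T] this]
  show ?thesis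
  proof eventually_elim
    case (elim n)
    show ?case
    proof (intro ballI)
      fix s y assume "s \<in> {0..T}" "y \<in> closure \<Omega>"
      then have "(s, y) \<in> {-\<tau>..T} \<times> closure \<Omega>" using tau_pos by auto
      then show "pair_dist (iter_pos n) (iter_vel n) lim_pos lim_vel s y \<le> \<epsilon>"
        using elim unfolding pair_dist_def by (force simp: dist_norm)
    qed
  qed
qed

lemma picard_iterate_tendsto:
  assumes t: "t \<ge> 0" and x: "x \<in> closure \<Omega>"
  shows "(\<lambda>n. pair_dist (iter_pos (Suc n)) (iter_vel (Suc n)) (picard_pos lim_vel) (picard_vel lim_pos lim_vel) t x)
    \<longlonglongrightarrow> 0"
proof (rule tendstoI)
  fix \<epsilon> :: real assume \<epsilon>: "\<epsilon> > 0"
  define K where "K = picard_rate t"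
  define \<epsilon>' where "\<epsilon>' = \<epsilon> / (K * t + 1)"
  have Kt: "K * t \<ge> 0" unfolding K_def using picard_rate_pos[OF t] t by simp
  then have \<epsilon>': "\<epsilon>' > 0" unfolding \<epsilon>'_def using \<epsilon> by simp
  from eventually_iterate_close[OF t \<epsilon>']
  show "\<forall>\<^sub>F n in sequentially. dist (pair_dist (iter_pos (Suc n)) (iter_vel (Suc n))
      (picard_pos lim_vel) (picard_vel lim_pos lim_vel) t x) 0 < \<epsilon>"
  proof eventually_elim
    case (elim n)
    have "pair_dist (picard_pos (iter_vel n)) (picard_vel (iter_pos n) (iter_vel n))
        (picard_pos lim_vel) (picard_vel lim_pos lim_vel) t x \<le> K * \<epsilon>' * t^Suc 0 / Suc 0"
      unfolding K_def picard_rate_def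
      by (rule picard_contraction[OF bounded_trajectory_iterate[OF t] bounded_trajectory_lim[OF t],
            where X = "closure \<Omega>"])
        (use elim t x \<epsilon>' in \<open>auto simp: iter_history lim_history intro: closure_subset[THEN subsetD]\<close>)
    also have "\<dots> < \<epsilon>"
      unfolding \<epsilon>'_def using \<epsilon> Kt by (simp add: field_simps)
    finally show ?case using pair_dist_nonneg by (simp add: iter_Suc)
  qed
qed

text \<open>The limit is a fixed point because the Picard operator is continuous for uniform convergence,
  which is the case \<open>m = 0\<close> of the contraction estimate.\<close>
lemma lim_fixed_point:
  assumes t: "t \<ge> 0" and x: "x \<in> closure \<Omega>"
  shows "lim_pos t x = picard_pos lim_vel t x" "lim_vel t x = picard_vel lim_pos lim_vel t x"
proof -
  have "(\<lambda>n. iter_pos (Suc n) t x - picard_pos lim_vel t x) \<longlonglongrightarrow> 0"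
    "(\<lambda>n. iter_vel (Suc n) t x - picard_vel lim_pos lim_vel t x) \<longlonglongrightarrow> 0"
    by (rule Lim_null_comparison[OF always_eventually picard_iterate_tendsto[OF t x]],
        simp add: pair_dist_def)+
  then have "(\<lambda>n. iter_pos (Suc n) t x) \<longlonglongrightarrow> picard_pos lim_vel t x"
    "(\<lambda>n. iter_vel (Suc n) t x) \<longlonglongrightarrow> picard_vel lim_pos lim_vel t x"
    by (auto intro: LIM_zero_cancel)
  moreover have "(\<lambda>n. iter_pos (Suc n) t x) \<longlonglongrightarrow> lim_pos t x" "(\<lambda>n. iter_vel (Suc n) t x) \<longlonglongrightarrow> lim_vel t x"
    using LIMSEQ_Suc[OF tendsto_iterate(1)] LIMSEQ_Suc[OF tendsto_iterate(2)] t x tau_pos by auto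
  ultimately show "lim_pos t x = picard_pos lim_vel t x" "lim_vel t x = picard_vel lim_pos lim_vel t x"
    by (auto intro: LIMSEQ_unique)
qed

lemma picard_vel_has_vector_derivative:
  assumes tr: "bounded_trajectory T B M e v" and t: "0 < t" "t < T" and x: "x \<in> closure \<Omega>"
  shows "((\<lambda>s. picard_vel e v s x) has_vector_derivative delayed_average e v t x - picard_vel e v t x) (at t)"
proof -
  define g where "g s = exp s *\<^sub>R delayed_average e v s x" for s
  define h where "h s = exp (-s) *\<^sub>R (vh 0 x + integral {0..s} g)" for s
  have cg: "continuous_on {0..T} g"
    unfolding g_def using continuous_on_fixed_snd[OF continuous_on_delayed_average[OF tr] x order_refl]
    by (intro continuous_intros)
  have tT: "t \<in> {0..T}" using t by auto
  have "(h has_vector_derivative exp (-t) *\<^sub>R g t + (- exp (-t)) *\<^sub>R (vh 0 x + integral {0..t} g))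
      (at t within {0..T})"
    unfolding h_def
  proof (rule has_vector_derivative_scaleR)
    show "((\<lambda>s. exp (-s)) has_field_derivative - exp (-t)) (at t within {0..T})"
      by (auto intro!: derivative_eq_intros)
    show "((\<lambda>s. vh 0 x + integral {0..s} g) has_vector_derivative g t) (at t within {0..T})"
      using integral_has_vector_derivative[OF cg tT] by (auto intro!: derivative_eq_intros)
  qed
  moreover have "exp (-t) *\<^sub>R g t = delayed_average e v t x"
    unfolding g_def by (simp add: exp_minus)
  moreover have "picard_vel e v t x = exp (-t) *\<^sub>R (vh 0 x + integral {0..t} g)"
    using t unfolding g_def by (simp add: picard_vel_nonneg)
  ultimately have "(h has_vector_derivative delayed_average e v t x - picard_vel e v t x) (at t within {0..T})"
    by (simp only: scaleR_minus_left diff_conv_add_uminus)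
  then have "(h has_vector_derivative delayed_average e v t x - picard_vel e v t x) (at t)"
    using at_within_interior[of t "{0..T}"] t by simp
  then show ?thesis
  proof (rule has_vector_derivative_transform_within_open[of _ _ _ "{0<..}"])
    show "h s = picard_vel e v s x" if "s \<in> {0<..}" for s
      using that unfolding h_def g_def by (simp add: picard_vel_nonneg)
  qed (use t in auto)
qed

lemma lim_is_solution: "is_solution_L \<tau> \<Omega> \<rho> \<psi> \<eta>h vh lim_pos lim_vel"
proof -
  have cont: "continuous_on ({0..} \<times> closure \<Omega>) (\<lambda>(t, x). lim_pos t x)"
    "continuous_on ({0..} \<times> closure \<Omega>) (\<lambda>(t, x). lim_vel t x)"
    using bounded_trajectoryD(1,2)[OF bounded_trajectory_lim] tau_pos
    by (auto intro!: continuous_on_atLeast_Times[of "-\<tau>"])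
  have "lim_pos t x = \<eta>h 0 x + integral {0..t} (\<lambda>s. lim_vel s x)" if "t \<ge> 0" "x \<in> closure \<Omega>" for t x
    using lim_fixed_point(1)[OF that] picard_pos_nonneg[OF that(1)] by simp
  note diff = integral_uniformly_differentiable[OF cont(2) compact_closure_Omega this]
  have ode: "((\<lambda>s. lim_vel s x) has_vector_derivative align_rhs \<tau> \<Omega> \<rho> \<psi> lim_pos lim_vel t x) (at t)"
    if x: "x \<in> \<Omega>" and t: "t > 0" for x t
  proof -
    have xc: "x \<in> closure \<Omega>" using x closure_subset by auto
    have "((\<lambda>s. picard_vel lim_pos lim_vel s x) has_vector_derivative
        delayed_average lim_pos lim_vel t x - picard_vel lim_pos lim_vel t x) (at t)"
      by (rule picard_vel_has_vector_derivative[OF bounded_trajectory_lim[of "t + 1"]]) (use t xc in auto)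
    then have "((\<lambda>s. picard_vel lim_pos lim_vel s x) has_vector_derivative
        delayed_average lim_pos lim_vel t x - lim_vel t x) (at t)"
      using lim_fixed_point(2)[of t x] t xc by simp
    then have "((\<lambda>s. lim_vel s x) has_vector_derivative delayed_average lim_pos lim_vel t x - lim_vel t x) (at t)"
    proof (rule has_vector_derivative_transform_within_open[of _ _ _ "{0<..}"])
      show "picard_vel lim_pos lim_vel s x = lim_vel s x" if "s \<in> {0<..}" for s
        using lim_fixed_point(2)[of s x] that xc by simp
    qed (use t in auto)
    then show ?thesis by (simp add: delayed_average_minus_eq_align_rhs)
  qed
  have "\<forall>s\<in>{-\<tau>..0}. \<forall>x\<in>closure \<Omega>. lim_pos s x = \<eta>h s x \<and> lim_vel s x = vh s x"
    using lim_history by simp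
  moreover have "\<forall>t\<ge>0. \<forall>e>0. \<exists>\<delta>>0. \<forall>s\<ge>0. \<bar>s - t\<bar> < \<delta> \<longrightarrow>
      (\<forall>x\<in>closure \<Omega>. norm (lim_pos s x - lim_pos t x - (s - t) *\<^sub>R lim_vel t x) \<le> e * \<bar>s - t\<bar>)"
    by (intro allI impI diff)
  moreover have "\<forall>x\<in>\<Omega>. \<forall>t>0. ((\<lambda>s. lim_vel s x) has_vector_derivative align_rhs \<tau> \<Omega> \<rho> \<psi> lim_pos lim_vel t x) (at t)"
    by (intro ballI allI impI ode)
  ultimately show ?thesis
    unfolding is_solution_L_def using cont by blast
qed

lemma norm_lim_vel_le: "t \<ge> 0 \<Longrightarrow> x \<in> closure \<Omega> \<Longrightarrow> norm (lim_vel t x) \<le> hist_vel_sup"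
  using bounded_trajectoryD(4)[OF bounded_trajectory_lim, of t t x] tau_pos by auto

section \<open>Uniqueness\<close>

lemma solution_history:
  assumes "is_solution_L \<tau> \<Omega> \<rho> \<psi> \<eta>h vh \<eta> v" "s \<in> {-\<tau>..0}" "x \<in> closure \<Omega>"
  shows "\<eta> s x = \<eta>h s x" "v s x = vh s x"
  using assms unfolding is_solution_L_def by auto

lemma solution_continuous:
  assumes S: "is_solution_L \<tau> \<Omega> \<rho> \<psi> \<eta>h vh \<eta> v" and T: "T \<ge> 0"
  shows "continuous_on ({-\<tau>..T} \<times> closure \<Omega>) (\<lambda>(t, x). \<eta> t x)"
    "continuous_on ({-\<tau>..T} \<times> closure \<Omega>) (\<lambda>(t, x). v t x)"
proof -
  have c: "continuous_on ({0..T} \<times> closure \<Omega>) (\<lambda>(t, x). \<eta> t x)"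
    "continuous_on ({0..T} \<times> closure \<Omega>) (\<lambda>(t, x). v t x)"
    using S unfolding is_solution_L_def by (auto intro: continuous_on_subset)
  have "continuous_on ({-\<tau>..T} \<times> closure \<Omega>) (\<lambda>(t, x). if t \<le> 0 then \<eta>h t x else \<eta> t x)"
    by (rule continuous_on_if_nonpos[OF _ T closed_closure continuous_history_pos c(1)])
      (use tau_pos solution_history(1)[OF S] in auto)
  then show "continuous_on ({-\<tau>..T} \<times> closure \<Omega>) (\<lambda>(t, x). \<eta> t x)"
    by (rule continuous_on_eq) (auto simp: solution_history(1)[OF S])
  have "continuous_on ({-\<tau>..T} \<times> closure \<Omega>) (\<lambda>(t, x). if t \<le> 0 then vh t x else v t x)"
    by (rule continuous_on_if_nonpos[OF _ T closed_closure continuous_history_vel c(2)])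
      (use tau_pos solution_history(2)[OF S] in auto)
  then show "continuous_on ({-\<tau>..T} \<times> closure \<Omega>) (\<lambda>(t, x). v t x)"
    by (rule continuous_on_eq) (auto simp: solution_history(2)[OF S])
qed

lemma solution_bounded_trajectory:
  assumes S: "is_solution_L \<tau> \<Omega> \<rho> \<psi> \<eta>h vh \<eta> v" and T: "T \<ge> 0"
  obtains B M where "bounded_trajectory T B M \<eta> v"
proof -
  have cmp: "compact ({-\<tau>..T} \<times> closure \<Omega>)" by (intro compact_Times compact_Icc compact_closure_Omega)
  obtain B where B: "\<forall>w\<in>(\<lambda>(t, x). \<eta> t x) ` ({-\<tau>..T} \<times> closure \<Omega>). norm w \<le> B"
    using compact_imp_bounded[OF compact_continuous_image[OF solution_continuous(1)[OF S T] cmp]]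
    unfolding bounded_iff by blast
  obtain M where M: "\<forall>w\<in>(\<lambda>(t, x). v t x) ` ({-\<tau>..T} \<times> closure \<Omega>). norm w \<le> M"
    using compact_imp_bounded[OF compact_continuous_image[OF solution_continuous(2)[OF S T] cmp]]
    unfolding bounded_iff by blast
  have "bounded_trajectory T B M \<eta> v"
    unfolding bounded_trajectory_def using solution_continuous[OF S T] B M by fastforce
  then show ?thesis by (rule that)
qed

lemma solution_pos_has_integral:
  assumes S: "is_solution_L \<tau> \<Omega> \<rho> \<psi> \<eta>h vh \<eta> v" and t: "t \<ge> 0" and x: "x \<in> closure \<Omega>"
  shows "((\<lambda>s. v s x) has_integral \<eta> t x - \<eta> 0 x) {0..t}"
proof (rule fundamental_theorem_of_calculus[OF t])
  fix s assume s: "s \<in> {0..t}"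
  show "((\<lambda>r. \<eta> r x) has_vector_derivative v s x) (at s within {0..t})"
    unfolding has_vector_derivative_def has_derivative_within_alt
  proof (intro conjI allI impI bounded_linear_scaleR_left)
    fix e :: real assume "e > 0"
    then obtain \<delta> where "\<delta> > 0" "\<forall>r\<ge>0. \<bar>r - s\<bar> < \<delta> \<longrightarrow>
        (\<forall>x\<in>closure \<Omega>. norm (\<eta> r x - \<eta> s x - (r - s) *\<^sub>R v s x) \<le> e * \<bar>r - s\<bar>)"
      using S s unfolding is_solution_L_def by force
    then show "\<exists>d>0. \<forall>r\<in>{0..t}. norm (r - s) < d \<longrightarrow> norm (\<eta> r x - \<eta> s x - (r - s) *\<^sub>R v s x) \<le> e * norm (r - s)"
      using x by (intro exI[of _ \<delta>]) auto
  qed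
qed

lemma solution_vel_has_integral:
  assumes S: "is_solution_L \<tau> \<Omega> \<rho> \<psi> \<eta>h vh \<eta> v" and t: "t \<ge> 0" and x: "x \<in> \<Omega>"
  shows "((\<lambda>s. exp s *\<^sub>R delayed_average \<eta> v s x) has_integral exp t *\<^sub>R v t x - v 0 x) {0..t}"
proof -
  have xc: "x \<in> closure \<Omega>" using x closure_subset by auto
  have "continuous_on {0..t} (\<lambda>s. v s x)"
    by (rule continuous_on_fixed_snd[OF solution_continuous(2)[OF S t] xc]) (use tau_pos in auto)
  then have "continuous_on {0..t} (\<lambda>s. exp s *\<^sub>R v s x)" by (intro continuous_intros)
  moreover have "((\<lambda>s. exp s *\<^sub>R v s x) has_vector_derivative exp s *\<^sub>R delayed_average \<eta> v s x) (at s)"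
    if "s \<in> {0<..<t}" for s
  proof -
    have "((\<lambda>s. v s x) has_vector_derivative delayed_average \<eta> v s x - v s x) (at s)"
      using S x that unfolding is_solution_L_def delayed_average_minus_eq_align_rhs by auto
    then have "((\<lambda>s. exp s *\<^sub>R v s x) has_vector_derivative
        exp s *\<^sub>R (delayed_average \<eta> v s x - v s x) + exp s *\<^sub>R v s x) (at s)"
      by (intro has_vector_derivative_scaleR DERIV_exp)
    then show ?thesis by (simp add: scaleR_diff_right)
  qed
  ultimately have "((\<lambda>s. exp s *\<^sub>R delayed_average \<eta> v s x) has_integral exp t *\<^sub>R v t x - exp 0 *\<^sub>R v 0 x) {0..t}"
    by (rule fundamental_theorem_of_calculus_interior[OF t])
  then show ?thesis by simp
qed

lemma solution_fixed_point:
  assumes S: "is_solution_L \<tau> \<Omega> \<rho> \<psi> \<eta>h vh \<eta> v" and t: "t \<ge> 0" and x: "x \<in> \<Omega>"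
  shows "\<eta> t x = picard_pos v t x" "v t x = picard_vel \<eta> v t x"
proof -
  have xc: "x \<in> closure \<Omega>" using x closure_subset by auto
  have h0: "\<eta> 0 x = \<eta>h 0 x" "v 0 x = vh 0 x" using solution_history[OF S _ xc, of 0] tau_pos by auto
  show "\<eta> t x = picard_pos v t x"
    using integral_unique[OF solution_pos_has_integral[OF S t xc]] h0 by (simp add: picard_pos_nonneg[OF t])
  show "v t x = picard_vel \<eta> v t x"
    using integral_unique[OF solution_vel_has_integral[OF S t x]] h0
    by (simp add: picard_vel_nonneg[OF t] exp_minus)
qed

lemma solutions_bounded_trajectory:
  assumes "is_solution_L \<tau> \<Omega> \<rho> \<psi> \<eta>h vh \<eta>1 v1" "is_solution_L \<tau> \<Omega> \<rho> \<psi> \<eta>h vh \<eta>2 v2" "T \<ge> 0"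
  obtains B M where "bounded_trajectory T B M \<eta>1 v1" "bounded_trajectory T B M \<eta>2 v2"
proof -
  obtain B1 M1 B2 M2 where "bounded_trajectory T B1 M1 \<eta>1 v1" "bounded_trajectory T B2 M2 \<eta>2 v2"
    using solution_bounded_trajectory[OF assms(1,3)] solution_bounded_trajectory[OF assms(2,3)] by metis
  then show ?thesis
    by (intro that[of "max B1 B2" "max M1 M2"]) (auto elim: bounded_trajectory_mono)
qed

lemma solutions_agree_on_Omega:
  assumes S1: "is_solution_L \<tau> \<Omega> \<rho> \<psi> \<eta>h vh \<eta>1 v1" and S2: "is_solution_L \<tau> \<Omega> \<rho> \<psi> \<eta>h vh \<eta>2 v2"
    and t: "t \<ge> 0" and x: "x \<in> \<Omega>"
  shows "\<eta>1 t x = \<eta>2 t x \<and> v1 t x = v2 t x"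
proof -
  obtain B M where tr1: "bounded_trajectory t B M \<eta>1 v1" and tr2: "bounded_trajectory t B M \<eta>2 v2"
    using solutions_bounded_trajectory[OF S1 S2 t] .
  define K where "K = 1 + 3 * average_lip B M"
  define C where "C = 2 * B + 2 * M"
  have "average_lip B M > 0"
    by (rule average_lip_pos) (use bounded_trajectory_nonneg[OF tr1 t] in auto)
  then have K: "K \<ge> 0" and C: "C \<ge> 0"
    unfolding K_def C_def using bounded_trajectory_nonneg[OF tr1 t] by auto
  have hist: "\<eta>1 s y = \<eta>2 s y \<and> v1 s y = v2 s y" if "s \<in> {-\<tau>..0}" "y \<in> \<Omega>" for s y
  proof -
    have "y \<in> closure \<Omega>" using that(2) closure_subset by auto
    then show ?thesis using solution_history[OF S1 that(1)] solution_history[OF S2 that(1)] by simp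
  qed
  have bound: "pair_dist \<eta>1 v1 \<eta>2 v2 t x \<le> C * (K * t)^n / fact n" for n
  proof (rule picard_factorial_bound[where f = "\<lambda>_. pair_dist \<eta>1 v1 \<eta>2 v2", OF K C _ _ _ x])
    fix s y assume "s \<in> {0..t}" "y \<in> \<Omega>"
    then show "pair_dist \<eta>1 v1 \<eta>2 v2 s y \<le> C"
      unfolding C_def using tau_pos closure_subset by (intro pair_dist_le_bounds[OF tr1 tr2]) auto
  next
    fix c m s y
    assume "c \<ge> 0" "s \<in> {0..t}" "y \<in> \<Omega>"
      and "\<And>s y. s \<in> {0..t} \<Longrightarrow> y \<in> \<Omega> \<Longrightarrow> pair_dist \<eta>1 v1 \<eta>2 v2 s y \<le> c * s^m"
    then have "pair_dist (picard_pos v1) (picard_vel \<eta>1 v1) (picard_pos v2) (picard_vel \<eta>2 v2) s y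
        \<le> K * c * s^Suc m / Suc m"
      unfolding K_def
      by (intro picard_contraction[OF tr1 tr2 hist, where X = \<Omega>]) (auto intro: closure_subset[THEN subsetD])
    then show "pair_dist \<eta>1 v1 \<eta>2 v2 s y \<le> K * c * s^Suc m / Suc m"
      using solution_fixed_point[OF S1] solution_fixed_point[OF S2] \<open>s \<in> {0..t}\<close> \<open>y \<in> \<Omega>\<close>
      unfolding pair_dist_def by auto
  qed (use t in auto)
  have "pair_dist \<eta>1 v1 \<eta>2 v2 t x \<le> 0"
    by (rule LIMSEQ_le_const[OF summable_LIMSEQ_zero[OF summable_exp_series]]) (use bound in auto)
  then show ?thesis using pair_dist_leD[of \<eta>1 v1 \<eta>2 v2 t x 0] by simp
qed

lemma solutions_agree:
  assumes S1: "is_solution_L \<tau> \<Omega> \<rho> \<psi> \<eta>h vh \<eta>1 v1" and S2: "is_solution_L \<tau> \<Omega> \<rho> \<psi> \<eta>h vh \<eta>2 v2"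
    and t: "t \<ge> -\<tau>" and x: "x \<in> closure \<Omega>"
  shows "\<eta>1 t x = \<eta>2 t x \<and> v1 t x = v2 t x"
proof (cases "t \<le> 0")
  case True
  then show ?thesis using solution_history[OF S1] solution_history[OF S2] t x by auto
next
  case False
  then have t0: "t \<ge> 0" and tt: "t \<in> {-\<tau>..t}" using t by auto
  note c1 = solution_continuous[OF S1 t0] and c2 = solution_continuous[OF S2 t0]
  have "norm (\<eta>1 t x - \<eta>2 t x) \<le> 0"
    by (rule continuous_on_closure_norm_le[OF _ _ x])
      (use solutions_agree_on_Omega[OF S1 S2 t0] in
        \<open>auto intro!: continuous_intros continuous_on_fixed_fst[OF c1(1) tt order_refl]
          continuous_on_fixed_fst[OF c2(1) tt order_refl]\<close>)
  moreover have "norm (v1 t x - v2 t x) \<le> 0"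
    by (rule continuous_on_closure_norm_le[OF _ _ x])
      (use solutions_agree_on_Omega[OF S1 S2 t0] in
        \<open>auto intro!: continuous_intros continuous_on_fixed_fst[OF c1(2) tt order_refl]
          continuous_on_fixed_fst[OF c2(2) tt order_refl]\<close>)
  ultimately show ?thesis by simp
qed

end

theorem theorem2p1:
  fixes \<tau> :: real and \<Omega>0 :: "'a::euclidean_space set" and \<rho>0 :: "'a \<Rightarrow> real"
    and \<psi> :: "'a \<Rightarrow> real" and \<psi>t :: "real \<Rightarrow> real"
    and \<eta>h vh :: "real \<Rightarrow> 'a \<Rightarrow> 'a"
  assumes tau: "\<tau> > 0"
    and Omega: "bounded \<Omega>0" "open \<Omega>0"
    and rho_nonneg: "\<forall>x\<in>\<Omega>0. \<rho>0 x \<ge> 0"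
    and rho_int: "\<rho>0 integrable_on \<Omega>0"
    and rho_mass: "integral \<Omega>0 \<rho>0 = 1"
    and psi: "assumption_A1 \<psi> \<psi>t"
    and hist_eta: "continuous_on ({-\<tau>..0} \<times> closure \<Omega>0) (\<lambda>(s, x). \<eta>h s x)"
    and hist_v: "continuous_on ({-\<tau>..0} \<times> closure \<Omega>0) (\<lambda>(s, x). vh s x)"
    and hist_0: "\<forall>x\<in>\<Omega>0. \<eta>h 0 x = x"
  shows "(\<exists>\<eta> v. is_solution_L \<tau> \<Omega>0 \<rho>0 \<psi> \<eta>h vh \<eta> v \<and>
            (\<forall>t\<ge>0. \<forall>x\<in>\<Omega>0.
               norm (v t x) \<le> (SUP p\<in>{-\<tau>..0} \<times> \<Omega>0. norm (vh (fst p) (snd p))))) \<and>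
         (\<forall>\<eta>1 v1 \<eta>2 v2. is_solution_L \<tau> \<Omega>0 \<rho>0 \<psi> \<eta>h vh \<eta>1 v1 \<and>
            is_solution_L \<tau> \<Omega>0 \<rho>0 \<psi> \<eta>h vh \<eta>2 v2 \<longrightarrow>
            (\<forall>t\<ge>-\<tau>. \<forall>x\<in>closure \<Omega>0. \<eta>1 t x = \<eta>2 t x \<and> v1 t x = v2 t x))"
proof -
  interpret alignment_history \<Omega>0 \<rho>0 \<psi> \<psi>t \<tau> \<eta>h vh
    by unfold_locales (use tau Omega rho_nonneg rho_int rho_mass psi hist_eta hist_v in auto)
  have "norm (lim_vel t x) \<le> (SUP p\<in>{-\<tau>..0} \<times> \<Omega>0. norm (vh (fst p) (snd p)))" if "t \<ge> 0" "x \<in> \<Omega>0" for t x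
    using norm_lim_vel_le[OF that(1)] that(2) closure_subset unfolding hist_vel_sup_def by auto
  then show ?thesis using lim_is_solution solutions_agree by blast
qed

end
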